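(* Let $\Gamma$ be a subalgebra of the $\Bbbk$-algebra $A$ such that (i) $\Gamma$ is noetherian, (ii) $\Gamma$ is quasicommutative, and (iii) $\Gamma$ is quasicentral in $A$. Then $\Gamma$ is a Harish-Chandra block subalgebra of $A$ with respect to the equality relation. Furthermore, for every $\mathfrak m\in\mathrm{cfs}(\Gamma)$ and $m\ge1$, $$\mathrm{Supp}(A/A\mathfrak m^m)\subseteq X(\mathfrak m):=\bigcup_{a\in A}\{\mathfrak n\in\mathrm{cfs}(\Gamma):S_{\mathfrak n}\in\mathrm{Fact}(\Gamma a\Gamma/\Gamma a\mathfrak m)\}.$$
   Context: $\mathrm{cfs}(\Gamma)$: maximal two-sided ideals $\mathfrak m$ of $\Gamma$ with $\dim\Gamma/\mathfrak m<\infty$; $S_{\mathfrak m}$ is the unique simple $\Gamma/\mathfrak m$-module; $\mathrm{Fact}(M)$ is the set of composition factors of a finite-dimensional module $M$. $\Gamma$ is quasicommutative if $\mathrm{Ext}^1_\Gamma(S_{\mathfrak m},S_{\mathfrak n})=0$ for distinct $\mathfrak m,\mathfrak n\in\mathrm{cfs}(\Gamma)$; $\Gamma$ is quasicentral in $A$ if $\Gamma a\Gamma$ is finitely generated as a left and as a right $\Gamma$-module for every $a\in A$. With respect to the equality relation, the classes are singletons $\{\mathfrak m\}$ (identified with $\mathfrak m$), and for a $\Gamma$-module $V$, $V(\mathfrak m)=\{v:\mathfrak m^kv=0$ for some $k\ge0\}$; $V$ is a block module if $V=\bigoplus_{\mathfrak m}V(\mathfrak m)$, and $\mathrm{Supp}(V)=\{\mathfrak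 m:V(\mathfrak m)\ne0\}$. $\Gamma$ is a Harish-Chandra block subalgebra of $A$ w.r.t. equality if $A/A\mathfrak m^k$ is a block module over $\Gamma$ for all $\mathfrak m\in\mathrm{cfs}(\Gamma)$, $k\ge0$. *)

theory Defs
  imports Main "HOL-Library.Function_Algebras"
begin

definition is_algebra :: "('k::field \<Rightarrow> 'a::ring_1 \<Rightarrow> 'a) \<Rightarrow> bool" where
  "is_algebra smult \<longleftrightarrow>
     (\<forall>c x y. smult c (x + y) = smult c x + smult c y) \<and>
     (\<forall>c d x. smult (c + d) x = smult c x + smult d x) \<and>
     (\<forall>c d x. smult (c * d) x = smult c (smult d x)) \<and>
     (\<forall>x. smult 1 x = x) \<and>
     (\<forall>c x y. smult c (x * y) = smult c x * y \<and> smult c (x * y) = x * smult c y)"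

definition subalgebra :: "('k::field \<Rightarrow> 'a::ring_1 \<Rightarrow> 'a) \<Rightarrow> 'a set \<Rightarrow> bool" where
  "subalgebra smult G \<longleftrightarrow> 0 \<in> G \<and> 1 \<in> G \<and>
     (\<forall>x\<in>G. \<forall>y\<in>G. x + y \<in> G \<and> x * y \<in> G) \<and> (\<forall>x\<in>G. - x \<in> G) \<and>
     (\<forall>c. \<forall>x\<in>G. smult c x \<in> G)"

definition setmul :: "'a::ring_1 set \<Rightarrow> 'a set \<Rightarrow> 'a set" where
  "setmul X Y = {\<Sum>i<n. x i * y i | (n::nat) x y. \<forall>i<n. x i \<in> X \<and> y i \<in> Y}"

fun idealpow :: "'a::ring_1 set \<Rightarrow> 'a set \<Rightarrow> nat \<Rightarrow> 'a set" where
  "idealpow G m 0 = G"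
| "idealpow G m (Suc k) = setmul m (idealpow G m k)"

definition two_sided_ideal :: "'a::ring_1 set \<Rightarrow> 'a set \<Rightarrow> bool" where
  "two_sided_ideal G I \<longleftrightarrow> I \<subseteq> G \<and> 0 \<in> I \<and> (\<forall>x\<in>I. \<forall>y\<in>I. x + y \<in> I) \<and>
     (\<forall>g\<in>G. \<forall>x\<in>I. g * x \<in> I \<and> x * g \<in> I)"

definition left_ideal :: "'a::ring_1 set \<Rightarrow> 'a set \<Rightarrow> bool" where
  "left_ideal G I \<longleftrightarrow> I \<subseteq> G \<and> 0 \<in> I \<and> (\<forall>x\<in>I. \<forall>y\<in>I. x + y \<in> I) \<and>
     (\<forall>g\<in>G. \<forall>x\<in>I. g * x \<in> I)"

definition right_ideal :: "'a::ring_1 set \<Rightarrow> 'a set \<Rightarrow> bool" where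
  "right_ideal G I \<longleftrightarrow> I \<subseteq> G \<and> 0 \<in> I \<and> (\<forall>x\<in>I. \<forall>y\<in>I. x + y \<in> I) \<and>
     (\<forall>g\<in>G. \<forall>x\<in>I. x * g \<in> I)"

definition noetherian :: "'a::ring_1 set \<Rightarrow> bool" where
  "noetherian G \<longleftrightarrow>
     (\<forall>I :: nat \<Rightarrow> 'a set. (\<forall>i. left_ideal G (I i) \<and> I i \<subseteq> I (Suc i))
         \<longrightarrow> (\<exists>N. \<forall>i\<ge>N. I i = I N)) \<and>
     (\<forall>I :: nat \<Rightarrow> 'a set. (\<forall>i. right_ideal G (I i) \<and> I i \<subseteq> I (Suc i))
         \<longrightarrow> (\<exists>N. \<forall>i\<ge>N. I i = I N))"

definition maximal_ideal :: "'a::ring_1 set \<Rightarrow> 'a set \<Rightarrow> bool" where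
  "maximal_ideal G m \<longleftrightarrow> two_sided_ideal G m \<and> m \<noteq> G \<and>
     (\<forall>J. two_sided_ideal G J \<and> m \<subseteq> J \<longrightarrow> J = m \<or> J = G)"

definition fin_codim :: "('k::field \<Rightarrow> 'a::ring_1 \<Rightarrow> 'a) \<Rightarrow> 'a set \<Rightarrow> 'a set \<Rightarrow> bool" where
  "fin_codim smult G m \<longleftrightarrow> (\<exists>F. finite F \<and> F \<subseteq> G \<and>
     (\<forall>g\<in>G. \<exists>c. g - (\<Sum>f\<in>F. smult (c f) f) \<in> m))"

definition cfs :: "('k::field \<Rightarrow> 'a::ring_1 \<Rightarrow> 'a) \<Rightarrow> 'a set \<Rightarrow> 'a set set" where
  "cfs smult G = {m. maximal_ideal G m \<and> fin_codim smult G m}"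

definition gmodule :: "'a::ring_1 set \<Rightarrow> ('a \<Rightarrow> 'v::ab_group_add \<Rightarrow> 'v) \<Rightarrow> 'v set \<Rightarrow> bool" where
  "gmodule G act E \<longleftrightarrow> 0 \<in> E \<and> (\<forall>v\<in>E. \<forall>w\<in>E. v + w \<in> E) \<and> (\<forall>v\<in>E. - v \<in> E) \<and>
     (\<forall>g\<in>G. \<forall>v\<in>E. act g v \<in> E) \<and>
     (\<forall>g\<in>G. \<forall>h\<in>G. \<forall>v\<in>E. act (g + h) v = act g v + act h v \<and> act (g * h) v = act g (act h v)) \<and>
     (\<forall>g\<in>G. \<forall>v\<in>E. \<forall>w\<in>E. act g (v + w) = act g v + act g w) \<and>
     (\<forall>v\<in>E. act 1 v = v)"

definition gsubmodule :: "'a::ring_1 set \<Rightarrow> ('a \<Rightarrow> 'v::ab_group_add \<Rightarrow> 'v) \<Rightarrow> 'v set \<Rightarrow> 'v set \<Rightarrow> bool" where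
  "gsubmodule G act E N \<longleftrightarrow> N \<subseteq> E \<and> 0 \<in> N \<and> (\<forall>v\<in>N. \<forall>w\<in>N. v + w \<in> N) \<and> (\<forall>v\<in>N. - v \<in> N) \<and>
     (\<forall>g\<in>G. \<forall>v\<in>N. act g v \<in> N)"

text \<open>Ext^1_G(S_m, S_n) = 0: every extension 0 -> S_n -> E -> S_m -> 0 splits.
  A submodule N is isomorphic to S_n iff it is simple and annihilated by n (S_n is the unique
  simple G/n-module); similarly for E/N and S_m.  All such E are finite dimensional over k,
  hence realisable as modules whose carrier lies in the k-vector space nat => k.\<close>
definition ext1_vanishes :: "('k::field \<Rightarrow> 'a::ring_1 \<Rightarrow> 'a) \<Rightarrow> 'a set \<Rightarrow> 'a set \<Rightarrow> 'a set \<Rightarrow> bool" where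
  "ext1_vanishes smult G m n \<longleftrightarrow>
     (\<forall>(act :: 'a \<Rightarrow> (nat \<Rightarrow> 'k) \<Rightarrow> (nat \<Rightarrow> 'k)) E N.
        gmodule G act E \<and> gsubmodule G act E N \<and>
        N \<noteq> {0} \<and> (\<forall>L. gsubmodule G act E L \<and> L \<subseteq> N \<longrightarrow> L = {0} \<or> L = N) \<and>
        (\<forall>g\<in>n. \<forall>v\<in>N. act g v = 0) \<and>
        N \<noteq> E \<and> (\<forall>L. gsubmodule G act E L \<and> N \<subseteq> L \<longrightarrow> L = N \<or> L = E) \<and>
        (\<forall>g\<in>m. \<forall>v\<in>E. act g v \<in> N)
      \<longrightarrow> (\<exists>C. gsubmodule G act E C \<and> N \<inter> C = {0} \<and> (\<forall>v\<in>E. \<exists>x\<in>N. \<exists>y\<in>C. v = x + y)))"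

definition quasicommutative :: "('k::field \<Rightarrow> 'a::ring_1 \<Rightarrow> 'a) \<Rightarrow> 'a set \<Rightarrow> bool" where
  "quasicommutative smult G \<longleftrightarrow>
     (\<forall>m\<in>cfs smult G. \<forall>n\<in>cfs smult G. m \<noteq> n \<longrightarrow> ext1_vanishes smult G m n)"

definition fg_left :: "'a::ring_1 set \<Rightarrow> 'a set \<Rightarrow> bool" where
  "fg_left G M \<longleftrightarrow> (\<exists>F. finite F \<and> F \<subseteq> M \<and>
     M = {\<Sum>f\<in>F. c f * f | c. \<forall>f\<in>F. c f \<in> G})"

definition fg_right :: "'a::ring_1 set \<Rightarrow> 'a set \<Rightarrow> bool" where
  "fg_right G M \<longleftrightarrow> (\<exists>F. finite F \<and> F \<subseteq> M \<and>
     M = {\<Sum>f\<in>F. f * c f | c. \<forall>f\<in>F. c f \<in> G})"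

definition dbl :: "'a::ring_1 set \<Rightarrow> 'a \<Rightarrow> 'a set \<Rightarrow> 'a set" where
  "dbl G a H = setmul (setmul G {a}) H"

definition quasicentral :: "'a::ring_1 set \<Rightarrow> bool" where
  "quasicentral G \<longleftrightarrow> (\<forall>a. fg_left G (dbl G a G) \<and> fg_right G (dbl G a G))"

text \<open>For a left G-submodule L of A, V = A/L.  gpart G L n is the preimage in A of V(n).\<close>
definition gpart :: "'a::ring_1 set \<Rightarrow> 'a set \<Rightarrow> 'a set \<Rightarrow> 'a set" where
  "gpart G L n = {x. \<exists>j. \<forall>g\<in>idealpow G n j. g * x \<in> L}"

definition block_quot :: "('k::field \<Rightarrow> 'a::ring_1 \<Rightarrow> 'a) \<Rightarrow> 'a set \<Rightarrow> 'a set \<Rightarrow> bool" where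
  "block_quot smult G L \<longleftrightarrow>
     (\<forall>x. \<exists>F y. finite F \<and> F \<subseteq> cfs smult G \<and> (\<forall>n\<in>F. y n \<in> gpart G L n) \<and>
          x - (\<Sum>n\<in>F. y n) \<in> L) \<and>
     (\<forall>F y. finite F \<and> F \<subseteq> cfs smult G \<and> (\<forall>n\<in>F. y n \<in> gpart G L n) \<and>
          (\<Sum>n\<in>F. y n) \<in> L \<longrightarrow> (\<forall>n\<in>F. y n \<in> L))"

definition supp_quot :: "('k::field \<Rightarrow> 'a::ring_1 \<Rightarrow> 'a) \<Rightarrow> 'a set \<Rightarrow> 'a set \<Rightarrow> 'a set set" where
  "supp_quot smult G L = {n \<in> cfs smult G. \<not> gpart G L n \<subseteq> L}"

definition Aideal :: "'a::ring_1 set \<Rightarrow> 'a set \<Rightarrow> nat \<Rightarrow> 'a set" where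
  "Aideal G m k = setmul UNIV (idealpow G m k)"

definition HC_block_subalgebra :: "('k::field \<Rightarrow> 'a::ring_1 \<Rightarrow> 'a) \<Rightarrow> 'a set \<Rightarrow> bool" where
  "HC_block_subalgebra smult G \<longleftrightarrow>
     (\<forall>m\<in>cfs smult G. \<forall>k. block_quot smult G (Aideal G m k))"

text \<open>Left G-submodules of A and composition factors: S_n is in Fact(M/M0) iff it is
  isomorphic to a simple subquotient N/N' with M0 <= N' < N <= M, i.e. N/N' simple and
  annihilated by n.\<close>
definition left_submod :: "'a::ring_1 set \<Rightarrow> 'a set \<Rightarrow> bool" where
  "left_submod G N \<longleftrightarrow> 0 \<in> N \<and> (\<forall>x\<in>N. \<forall>y\<in>N. x + y \<in> N) \<and> (\<forall>g\<in>G. \<forall>x\<in>N. g * x \<in> N)"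

definition is_factor :: "'a::ring_1 set \<Rightarrow> 'a set \<Rightarrow> 'a set \<Rightarrow> 'a set \<Rightarrow> bool" where
  "is_factor G n M M0 \<longleftrightarrow> (\<exists>N N'. left_submod G N \<and> left_submod G N' \<and>
     M0 \<subseteq> N' \<and> N' \<subseteq> N \<and> N \<subseteq> M \<and> N' \<noteq> N \<and>
     (\<forall>L. left_submod G L \<and> N' \<subseteq> L \<and> L \<subseteq> N \<longrightarrow> L = N' \<or> L = N) \<and>
     (\<forall>g\<in>n. \<forall>x\<in>N. g * x \<in> N'))"

definition Xset :: "('k::field \<Rightarrow> 'a::ring_1 \<Rightarrow> 'a) \<Rightarrow> 'a set \<Rightarrow> 'a set \<Rightarrow> 'a set set" where
  "Xset smult G m = (\<Union>a. {n \<in> cfs smult G. is_factor G n (dbl G a G) (dbl G a m)})"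

end

theory Submission
  imports Defs "HOL.Vector_Spaces" "HOL-Library.Set_Algebras"
begin

text \<open>
  Subquotients of \<open>A\<close> are modelled by pairs \<open>N' \<subseteq> N\<close> of left \<open>\<Gamma>\<close>-submodules of \<open>A\<close>.
  Since \<open>\<Gamma> x \<Gamma>\<close> is a finitely generated right \<open>\<Gamma>\<close>-module (quasicentrality) and
  \<open>\<Gamma> / m\<^sup>k\<close> is finite-dimensional (noetherianity), every \<open>x\<close> lies in the finite-dimensional
  subquotient \<open>(\<Gamma> x \<Gamma> + A m\<^sup>k) / A m\<^sup>k\<close>.  A finite-dimensional \<open>N / N'\<close> splits into
  generalized weight spaces by induction on its dimension: the annihilator \<open>n\<^sub>0\<close> of a simple
  submodule \<open>U / N'\<close> lies in \<open>cfs(\<Gamma>)\<close>, and since \<open>Ext\<^sup>1(S\<^sub>q, S\<^sub>n\<^sub>0) = 0\<close> for \<open>q \<noteq> n\<^sub>0\<close>,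
  \<open>U / N'\<close> is a direct summand of the \<open>n\<close>-component of \<open>N / N'\<close> for every \<open>n \<noteq> n\<^sub>0\<close>.  So the
  \<open>n\<close>-components of \<open>N / U\<close> lift to \<open>N / N'\<close>, and what remains lies in the \<open>n\<^sub>0\<close>-component.
  The decomposition is direct by the Chinese remainder theorem for powers of distinct maximal ideals.

  For the support, a simple submodule \<open>U\<close> of \<open>(\<Gamma> x + A m\<^sup>k) / A m\<^sup>k\<close>, with \<open>x\<close> in the
  \<open>n\<close>-component, is annihilated by \<open>n\<close>: its annihilator is maximal and contains a power of \<open>n\<close>.
  It survives in a layer \<open>A m\<^sup>t / A m\<^sup>t\<^sup>+\<^sup>1\<close> of the \<open>m\<close>-adic filtration.  Writing a generator
  as \<open>\<Sum> a\<^sub>i \<mu>\<^sub>i\<close> with \<open>\<mu>\<^sub>i \<in> m\<^sup>t\<close> exhibits \<open>S\<^sub>n\<close> as a composition factor of some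
  \<open>(\<Gamma> a\<^sub>i \<Gamma> \<mu>\<^sub>i + A m\<^sup>t\<^sup>+\<^sup>1) / A m\<^sup>t\<^sup>+\<^sup>1\<close>, and pulling back along \<open>z \<mapsto> z \<mu>\<^sub>i\<close>, of
  \<open>\<Gamma> a\<^sub>i \<Gamma> / \<Gamma> a\<^sub>i m\<close>.
\<close>

lemma sum_lessThan_add:
  fixes f :: "nat \<Rightarrow> 'b::comm_monoid_add"
  shows "(\<Sum>i<m + n. f i) = (\<Sum>i<m. f i) + (\<Sum>i<n. f (m + i))"
  by (induction n) (simp_all add: add.assoc)

lemma setmul_memE:
  assumes "s \<in> setmul X Y"
  obtains n :: nat and x y where "s = (\<Sum>i<n. x i * y i)" "\<forall>i<n. x i \<in> X \<and> y i \<in> Y"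
  using assms unfolding setmul_def by blast

lemma setmul_zero: "0 \<in> setmul X Y"
  unfolding setmul_def by (rule CollectI, rule exI[of _ 0]) auto

lemma setmul_mult: "x \<in> X \<Longrightarrow> y \<in> Y \<Longrightarrow> x * y \<in> setmul X Y"
  unfolding setmul_def
  by (rule CollectI, rule exI[of _ 1], rule exI[of _ "\<lambda>_. x"], rule exI[of _ "\<lambda>_. y"]) auto

lemma setmul_add:
  assumes "a \<in> setmul X Y" "b \<in> setmul X Y"
  shows "a + b \<in> setmul X Y"
proof -
  obtain m :: nat and x1 y1 where a: "a = (\<Sum>i<m. x1 i * y1 i)" "\<forall>i<m. x1 i \<in> X \<and> y1 i \<in> Y"
    using assms(1) by (rule setmul_memE)
  obtain n :: nat and x2 y2 where b: "b = (\<Sum>i<n. x2 i * y2 i)" "\<forall>i<n. x2 i \<in> X \<and> y2 i \<in> Y"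
    using assms(2) by (rule setmul_memE)
  define x where "x i = (if i < m then x1 i else x2 (i - m))" for i
  define y where "y i = (if i < m then y1 i else y2 (i - m))" for i
  have "a + b = (\<Sum>i<m + n. x i * y i)"
    unfolding sum_lessThan_add a b x_def y_def by simp
  moreover have "\<forall>i<m + n. x i \<in> X \<and> y i \<in> Y"
    using a(2) b(2) unfolding x_def y_def by auto
  ultimately show ?thesis unfolding setmul_def by blast
qed

lemma setmul_least:
  assumes "0 \<in> W" "\<And>a b. a \<in> W \<Longrightarrow> b \<in> W \<Longrightarrow> a + b \<in> W"
    and "\<And>x y. x \<in> X \<Longrightarrow> y \<in> Y \<Longrightarrow> x * y \<in> W"
  shows "setmul X Y \<subseteq> W"
proof
  fix s assume "s \<in> setmul X Y"
  then obtain n :: nat and x y where s: "s = (\<Sum>i<n. x i * y i)" "\<forall>i<n. x i \<in> X \<and> y i \<in> Y"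
    by (rule setmul_memE)
  have "(\<Sum>i<k. x i * y i) \<in> W" if "k \<le> n" for k
    using that by (induction k) (auto simp: assms s(2))
  then show "s \<in> W" using s(1) by blast
qed

lemma setmul_mono: "X \<subseteq> X' \<Longrightarrow> Y \<subseteq> Y' \<Longrightarrow> setmul X Y \<subseteq> setmul X' Y'"
  by (rule setmul_least) (auto intro: setmul_zero setmul_add setmul_mult)

lemma setmul_mult_left:
  assumes "\<And>x. x \<in> X \<Longrightarrow> g * x \<in> X" and "s \<in> setmul X Y"
  shows "g * s \<in> setmul X Y"
proof -
  have "setmul X Y \<subseteq> {s. g * s \<in> setmul X Y}"
    by (rule setmul_least)
      (auto simp: distrib_left setmul_zero setmul_add mult.assoc[symmetric] intro: setmul_mult assms(1))
  then show ?thesis using assms(2) by blast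
qed

lemma setmul_mult_right:
  assumes "\<And>y. y \<in> Y \<Longrightarrow> y * g \<in> Y" and "s \<in> setmul X Y"
  shows "s * g \<in> setmul X Y"
proof -
  have "setmul X Y \<subseteq> {s. s * g \<in> setmul X Y}"
    by (rule setmul_least)
      (auto simp: distrib_right setmul_zero setmul_add mult.assoc intro: setmul_mult assms(1))
  then show ?thesis using assms(2) by blast
qed

lemma setmul_apply:
  assumes "0 \<in> W" "\<And>a b. a \<in> W \<Longrightarrow> b \<in> W \<Longrightarrow> a + b \<in> W"
    and "\<And>x y. x \<in> X \<Longrightarrow> y \<in> Y \<Longrightarrow> x * (y * v) \<in> W" and "s \<in> setmul X Y"
  shows "s * v \<in> W"
proof -
  have "setmul X Y \<subseteq> {s. s * v \<in> W}"
    by (rule setmul_least) (auto simp: assms(1,2,3) distrib_right mult.assoc)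
  then show ?thesis using assms(4) by blast
qed

lemma subset_set_plus_left: "0 \<in> B \<Longrightarrow> A \<subseteq> A + (B :: 'a::comm_monoid_add set)"
  using set_zero_plus2[of B A] by (simp add: add.commute)

section \<open>Dimension modulo a subspace\<close>

context vector_space
begin

lemma subspace_set_plus:
  assumes A: "subspace A" and B: "subspace B"
  shows "subspace (A + B)"
  unfolding subspace_def
proof (intro conjI ballI allI)
  show "0 \<in> A + B" using set_plus_intro[OF subspace_0[OF A] subspace_0[OF B]] by simp
next
  fix x y assume "x \<in> A + B" "y \<in> A + B"
  then obtain a1 b1 a2 b2 where "x = a1 + b1" "y = a2 + b2" "a1 \<in> A" "b1 \<in> B" "a2 \<in> A" "b2 \<in> B"
    by (auto elim!: set_plus_elim)
  then show "x + y \<in> A + B"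
    using set_plus_intro[OF subspace_add[OF A] subspace_add[OF B]] by (simp add: add_ac)
next
  fix c x assume "x \<in> A + B"
  then obtain a b where "x = a + b" "a \<in> A" "b \<in> B" by (rule set_plus_elim)
  then show "c *s x \<in> A + B"
    using set_plus_intro[OF subspace_scale[OF A] subspace_scale[OF B]] by (simp add: scale_right_distrib)
qed

lemma set_plus_subset:
  assumes "subspace W" "X \<subseteq> W" "Y \<subseteq> W"
  shows "X + Y \<subseteq> W"
proof
  fix z assume "z \<in> X + Y"
  then obtain x y where "z = x + y" "x \<in> X" "y \<in> Y" by (rule set_plus_elim)
  then show "z \<in> W" using subspace_add[OF assms(1)] assms(2,3) by blast
qed

lemma span_plus_least: "subspace X \<Longrightarrow> B \<subseteq> X \<Longrightarrow> N \<subseteq> X \<Longrightarrow> span B + N \<subseteq> X"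
  by (intro set_plus_subset span_minimal)

lemma mem_span_plus_iff:
  assumes "finite B"
  shows "x \<in> span B + N \<longleftrightarrow> (\<exists>c. x - (\<Sum>b\<in>B. c b *s b) \<in> N)"
proof
  assume "x \<in> span B + N"
  then obtain y n where yn: "x = y + n" "y \<in> span B" "n \<in> N" by (rule set_plus_elim)
  then obtain c where "y = (\<Sum>b\<in>B. c b *s b)" using span_finite[OF assms] by auto
  then have "x - (\<Sum>b\<in>B. c b *s b) \<in> N" using yn by simp
  then show "\<exists>c. x - (\<Sum>b\<in>B. c b *s b) \<in> N" by blast
next
  assume "\<exists>c. x - (\<Sum>b\<in>B. c b *s b) \<in> N"
  then obtain c where c: "x - (\<Sum>b\<in>B. c b *s b) \<in> N" by blast
  have "(\<Sum>b\<in>B. c b *s b) \<in> span B" using span_finite[OF assms] by auto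
  from set_plus_intro[OF this c] show "x \<in> span B + N" by simp
qed

definition spans_mod :: "'b set \<Rightarrow> 'b set \<Rightarrow> 'b set \<Rightarrow> bool" where
  "spans_mod N N' B \<longleftrightarrow> finite B \<and> B \<subseteq> N \<and> N \<subseteq> span B + N'"

definition fin_dim_mod :: "'b set \<Rightarrow> 'b set \<Rightarrow> bool" where
  "fin_dim_mod N N' \<longleftrightarrow> (\<exists>B. spans_mod N N' B)"

definition dim_mod :: "'b set \<Rightarrow> 'b set \<Rightarrow> nat" where
  "dim_mod N N' = (LEAST d. \<exists>B. spans_mod N N' B \<and> card B = d)"

lemma dim_mod_spans: "fin_dim_mod N N' \<Longrightarrow> \<exists>B. spans_mod N N' B \<and> card B = dim_mod N N'"
  unfolding fin_dim_mod_def dim_mod_def by (rule LeastI_ex) blast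

lemma dim_mod_le: "spans_mod N N' B \<Longrightarrow> dim_mod N N' \<le> card B"
  unfolding dim_mod_def by (rule Least_le) blast

lemma spans_mod_mono: "N' \<subseteq> K \<Longrightarrow> spans_mod N N' B \<Longrightarrow> spans_mod N K B"
  unfolding spans_mod_def using set_plus_mono2[of "span B" "span B" N' K] by blast

lemma fin_dim_mod_mono: "N' \<subseteq> K \<Longrightarrow> fin_dim_mod N N' \<Longrightarrow> fin_dim_mod N K"
  unfolding fin_dim_mod_def using spans_mod_mono by blast

lemma dim_mod_mono:
  assumes "N' \<subseteq> K" "fin_dim_mod N N'"
  shows "dim_mod N K \<le> dim_mod N N'"
proof -
  obtain B where "spans_mod N N' B" "card B = dim_mod N N'" using dim_mod_spans[OF assms(2)] by blast
  then show ?thesis using dim_mod_le[OF spans_mod_mono[OF assms(1)]] by metis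
qed

lemma span_plus_remove:
  assumes K: "subspace K" and "N' \<subseteq> K" "finite B" "x \<in> K" "x - (\<Sum>b\<in>B. c b *s b) \<in> N'"
    and b0: "b0 \<in> B" "c b0 \<noteq> 0"
  shows "span B + N' \<subseteq> span (B - {b0}) + K"
proof (rule span_plus_least)
  let ?W = "span (B - {b0}) + K"
  have W: "subspace ?W" using subspace_set_plus[OF subspace_span K] .
  show "subspace ?W" by fact
  have KW: "K \<subseteq> ?W" by (rule set_zero_plus2[OF span_zero])
  with assms(2) show "N' \<subseteq> ?W" by (rule order_trans)
  have rest: "B - {b0} \<subseteq> ?W"
    using span_superset subset_set_plus_left[OF subspace_0[OF K], of "span (B - {b0})"] by (rule order_trans)
  have "x - (x - (\<Sum>b\<in>B. c b *s b)) \<in> K"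
    using subspace_diff[OF K assms(4)] assms(2,5) by blast
  then have "(\<Sum>b\<in>B. c b *s b) \<in> ?W" using KW by auto
  moreover have "(\<Sum>b\<in>B - {b0}. c b *s b) \<in> ?W"
    using rest by (intro subspace_sum[OF W] subspace_scale[OF W]) blast
  ultimately have "(\<Sum>b\<in>B. c b *s b) - (\<Sum>b\<in>B - {b0}. c b *s b) \<in> ?W"
    by (rule subspace_diff[OF W])
  then have "c b0 *s b0 \<in> ?W" using sum.remove[OF assms(3) b0(1), of "\<lambda>b. c b *s b"] by simp
  then have "inverse (c b0) *s c b0 *s b0 \<in> ?W" by (rule subspace_scale[OF W])
  then have "b0 \<in> ?W" using b0(2) by simp
  with rest show "B \<subseteq> ?W" by blast
qed

lemma dim_mod_less:
  assumes K: "subspace K" and fd: "fin_dim_mod N N'" and "N' \<subseteq> K" "K \<subseteq> N" "\<not> K \<subseteq> N'"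
  shows "dim_mod N K < dim_mod N N'"
proof -
  obtain B where B: "spans_mod N N' B" "card B = dim_mod N N'" using dim_mod_spans[OF fd] by blast
  have fin: "finite B" using B(1) unfolding spans_mod_def by blast
  obtain x where x: "x \<in> K" "x \<notin> N'" using assms(5) by blast
  have "x \<in> span B + N'" using B(1) x(1) assms(4) unfolding spans_mod_def by blast
  then obtain c where c: "x - (\<Sum>b\<in>B. c b *s b) \<in> N'" using mem_span_plus_iff[OF fin] by blast
  have "\<exists>b0\<in>B. c b0 \<noteq> 0"
  proof (rule ccontr)
    assume "\<not> (\<exists>b0\<in>B. c b0 \<noteq> 0)"
    then have "(\<Sum>b\<in>B. c b *s b) = 0" by simp
    then show False using c x(2) by simp
  qed
  then obtain b0 where b0: "b0 \<in> B" "c b0 \<noteq> 0" by blast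
  have "spans_mod N K (B - {b0})"
    using B(1) span_plus_remove[OF K assms(3) fin x(1) c b0] unfolding spans_mod_def by auto
  then have "dim_mod N K \<le> card (B - {b0})" by (rule dim_mod_le)
  also have "\<dots> < card B" using card_Diff1_less[OF fin b0(1)] .
  finally show ?thesis using B(2) by linarith
qed

lemma fin_dim_mod_subset:
  assumes K: "subspace K" and fd: "fin_dim_mod N N'" and "N' \<subseteq> K" "K \<subseteq> N"
  shows "fin_dim_mod K N'"
proof -
  obtain B where B: "finite B" "N \<subseteq> span B + N'" using fd unfolding fin_dim_mod_def spans_mod_def by blast
  obtain C where C: "C \<subseteq> span B \<inter> K" "independent C" "span B \<inter> K \<subseteq> span C"
    "card C = dim (span B \<inter> K)"
    by (rule basis_exists)
  have "C \<subseteq> span B" using C(1) by blast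
  then have "finite C" using independent_span_bound[OF B(1) C(2)] by blast
  moreover have "K \<subseteq> span C + N'"
  proof
    fix x assume x: "x \<in> K"
    then have "x \<in> span B + N'" using B(2) assms(4) by blast
    then obtain y n where yn: "x = y + n" "y \<in> span B" "n \<in> N'" by (rule set_plus_elim)
    have "y = x - n" using yn(1) by simp
    then have "y \<in> K" using subspace_diff[OF K x, of n] yn(3) assms(3) by blast
    then have "y \<in> span C" using yn(2) C(3) by blast
    then show "x \<in> span C + N'" using yn(1,3) by (simp add: set_plus_intro)
  qed
  ultimately show ?thesis using C(1) unfolding fin_dim_mod_def spans_mod_def by blast
qed

lemma independent_mod_if_minimal:
  assumes B: "spans_mod N T B" "card B = dim_mod N T" and T: "subspace T"
    and c: "(\<Sum>b\<in>B. c b *s b) \<in> T"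
  shows "\<forall>b\<in>B. c b = 0"
proof (rule ccontr)
  assume "\<not> (\<forall>b\<in>B. c b = 0)"
  then obtain b0 where b0: "b0 \<in> B" "c b0 \<noteq> 0" by blast
  have fin: "finite B" using B(1) unfolding spans_mod_def by blast
  have "span B + T \<subseteq> span (B - {b0}) + T"
    using span_plus_remove[of T T B "\<Sum>b\<in>B. c b *s b" c b0] T fin c b0 subspace_0[OF T] by simp
  then have "spans_mod N T (B - {b0})" using B(1) unfolding spans_mod_def by auto
  then have "dim_mod N T \<le> card (B - {b0})" by (rule dim_mod_le)
  also have "\<dots> < card B" using card_Diff1_less[OF fin b0(1)] .
  finally show False using B(2) by linarith
qed

lemma coordinates_mod:
  assumes T: "subspace T" and fd: "fin_dim_mod V T"
  obtains B coef where "finite B" "\<And>v. v \<in> V \<Longrightarrow> v - (\<Sum>b\<in>B. coef v b *s b) \<in> T"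
    "\<And>v c d. v - (\<Sum>b\<in>B. c b *s b) \<in> T \<Longrightarrow> v - (\<Sum>b\<in>B. d b *s b) \<in> T \<Longrightarrow> \<forall>b\<in>B. c b = d b"
proof -
  obtain B where B: "spans_mod V T B" "card B = dim_mod V T" using dim_mod_spans[OF fd] by blast
  have fin: "finite B" and VB: "V \<subseteq> span B + T" using B(1) unfolding spans_mod_def by auto
  have unique: "\<forall>b\<in>B. c b = d b"
    if "v - (\<Sum>b\<in>B. c b *s b) \<in> T" "v - (\<Sum>b\<in>B. d b *s b) \<in> T" for v c d
  proof -
    have "(\<Sum>b\<in>B. (d b - c b) *s b)
        = (v - (\<Sum>b\<in>B. c b *s b)) - (v - (\<Sum>b\<in>B. d b *s b))"
      by (simp add: scale_left_diff_distrib sum_subtractf)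
    then have "(\<Sum>b\<in>B. (d b - c b) *s b) \<in> T" using subspace_diff[OF T that] by simp
    then have "\<forall>b\<in>B. d b - c b = 0" by (rule independent_mod_if_minimal[OF B T])
    then show ?thesis by simp
  qed
  define coef where "coef v = (SOME c. v - (\<Sum>b\<in>B. c b *s b) \<in> T)" for v
  have coef: "v - (\<Sum>b\<in>B. coef v b *s b) \<in> T" if "v \<in> V" for v
  proof -
    have "v \<in> span B + T" using that VB by blast
    then have "\<exists>c. v - (\<Sum>b\<in>B. c b *s b) \<in> T" by (simp add: mem_span_plus_iff[OF fin])
    then show ?thesis unfolding coef_def by (rule someI_ex)
  qed
  from that[OF fin coef unique] show ?thesis .
qed

lemma quotient_coordinates:
  assumes T: "subspace T" and V: "subspace V" and fd: "fin_dim_mod V T"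
  obtains \<phi> :: "'b \<Rightarrow> nat \<Rightarrow> 'a"
  where "\<And>v w. v \<in> V \<Longrightarrow> w \<in> V \<Longrightarrow> \<phi> (v + w) = \<phi> v + \<phi> w"
    and "\<And>v w. v \<in> V \<Longrightarrow> w \<in> V \<Longrightarrow> \<phi> v = \<phi> w \<longleftrightarrow> v - w \<in> T"
proof -
  obtain B coef where fin: "finite B" and coef: "\<And>v. v \<in> V \<Longrightarrow> v - (\<Sum>b\<in>B. coef v b *s b) \<in> T"
    and unique: "\<And>v c d. v - (\<Sum>b\<in>B. c b *s b) \<in> T \<Longrightarrow> v - (\<Sum>b\<in>B. d b *s b) \<in> T \<Longrightarrow> \<forall>b\<in>B. c b = d b"
    using coordinates_mod[OF T fd] by blast
  obtain e where e: "bij_betw e {0..<card B} B" using ex_bij_betw_nat_finite[OF fin] by blast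
  define \<phi> where "\<phi> v = (\<lambda>i. if e i \<in> B then coef v (e i) else 0)" for v
  have \<phi>_eq: "\<phi> v = \<phi> w \<longleftrightarrow> (\<forall>b\<in>B. coef v b = coef w b)" for v w
  proof
    assume eq: "\<phi> v = \<phi> w"
    show "\<forall>b\<in>B. coef v b = coef w b"
    proof
      fix b assume b: "b \<in> B"
      then obtain i where "b = e i" using e unfolding bij_betw_def by auto
      then show "coef v b = coef w b" using fun_cong[OF eq, of i] b unfolding \<phi>_def by simp
    qed
  qed (auto simp: \<phi>_def)
  show ?thesis
  proof
    fix v w assume v: "v \<in> V" and w: "w \<in> V"
    have sum_eq: "(v + w) - (\<Sum>b\<in>B. (coef v b + coef w b) *s b)
        = (v - (\<Sum>b\<in>B. coef v b *s b)) + (w - (\<Sum>b\<in>B. coef w b *s b))"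
      by (simp add: scale_left_distrib sum.distrib)
    have "(v + w) - (\<Sum>b\<in>B. (coef v b + coef w b) *s b) \<in> T"
      unfolding sum_eq by (rule subspace_add[OF T coef[OF v] coef[OF w]])
    with coef[OF subspace_add[OF V v w]]
    have "\<forall>b\<in>B. coef (v + w) b = coef v b + coef w b" by (rule unique)
    then show "\<phi> (v + w) = \<phi> v + \<phi> w" by (simp add: \<phi>_def fun_eq_iff)
    show "\<phi> v = \<phi> w \<longleftrightarrow> v - w \<in> T"
    proof
      assume "\<phi> v = \<phi> w"
      then have "(\<Sum>b\<in>B. coef v b *s b) = (\<Sum>b\<in>B. coef w b *s b)" by (simp add: \<phi>_eq)
      then have "v - w = (v - (\<Sum>b\<in>B. coef v b *s b)) - (w - (\<Sum>b\<in>B. coef w b *s b))" by simp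
      then show "v - w \<in> T" using subspace_diff[OF T coef[OF v] coef[OF w]] by simp
    next
      assume "v - w \<in> T"
      have "w - (\<Sum>b\<in>B. coef v b *s b) = (v - (\<Sum>b\<in>B. coef v b *s b)) - (v - w)" by simp
      then have "w - (\<Sum>b\<in>B. coef v b *s b) \<in> T"
        using subspace_diff[OF T coef[OF v] \<open>v - w \<in> T\<close>] by simp
      then show "\<phi> v = \<phi> w" using unique coef[OF w] \<phi>_eq by blast
    qed
  qed
qed

end

locale k_subalgebra =
  fixes smult :: "'k::field \<Rightarrow> 'a::ring_1 \<Rightarrow> 'a" and G :: "'a set"
  assumes is_algebra: "is_algebra smult" and subalgebra: "subalgebra smult G"
begin

sublocale vector_space smult
  using is_algebra by unfold_locales (auto simp: is_algebra_def)

lemma smult_mult_left: "smult c (x * y) = smult c x * y"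
  and smult_mult_right: "smult c (x * y) = x * smult c y"
  using is_algebra unfolding is_algebra_def by blast+

lemma smult_eq_mult: "smult c x = smult c 1 * x"
  using smult_mult_left[of c 1 x] by simp

lemma G_zero: "0 \<in> G" and G_one: "1 \<in> G"
  and G_add: "x \<in> G \<Longrightarrow> y \<in> G \<Longrightarrow> x + y \<in> G"
  and G_mult: "x \<in> G \<Longrightarrow> y \<in> G \<Longrightarrow> x * y \<in> G"
  and G_minus: "x \<in> G \<Longrightarrow> - x \<in> G"
  and G_smult: "x \<in> G \<Longrightarrow> smult c x \<in> G"
  using subalgebra unfolding subalgebra_def by blast+

lemma subspace_G: "subspace G"
  unfolding subspace_def using G_zero G_add G_smult by blast

abbreviation submod :: "'a set \<Rightarrow> bool" where
  "submod X \<equiv> left_submod G X"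

lemma submod_zero: "submod X \<Longrightarrow> 0 \<in> X"
  and submod_add: "submod X \<Longrightarrow> x \<in> X \<Longrightarrow> y \<in> X \<Longrightarrow> x + y \<in> X"
  and submod_mult: "submod X \<Longrightarrow> g \<in> G \<Longrightarrow> x \<in> X \<Longrightarrow> g * x \<in> X"
  unfolding left_submod_def by blast+

lemma submod_minus: "submod X \<Longrightarrow> x \<in> X \<Longrightarrow> - x \<in> X"
  using submod_mult[of X "- 1" x] G_minus[OF G_one] by simp

lemma submod_diff: "submod X \<Longrightarrow> x \<in> X \<Longrightarrow> y \<in> X \<Longrightarrow> x - y \<in> X"
  using submod_add submod_minus by (metis diff_conv_add_uminus)

lemma submod_subspace: "submod X \<Longrightarrow> subspace X"
  unfolding subspace_def
  by (metis submod_zero submod_add submod_mult G_smult G_one smult_eq_mult)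

lemma submod_sum: "submod X \<Longrightarrow> (\<And>i. i \<in> I \<Longrightarrow> f i \<in> X) \<Longrightarrow> sum f I \<in> X"
  using subspace_sum submod_subspace by blast

lemma submod_smult: "submod X \<Longrightarrow> x \<in> X \<Longrightarrow> smult c x \<in> X"
  using subspace_scale submod_subspace by blast

lemma submod_Int: "submod X \<Longrightarrow> submod Y \<Longrightarrow> submod (X \<inter> Y)"
  unfolding left_submod_def by blast

lemma submod_G: "submod G"
  unfolding left_submod_def using G_zero G_add G_mult by blast

lemma submod_set_plus:
  assumes X: "submod X" and Y: "submod Y"
  shows "submod (X + Y)"
  unfolding left_submod_def
proof (intro conjI ballI)
  show "0 \<in> X + Y" using set_plus_intro[OF submod_zero[OF X] submod_zero[OF Y]] by simp
next
  fix a b assume "a \<in> X + Y" "b \<in> X + Y"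
  then obtain x1 y1 x2 y2 where "a = x1 + y1" "b = x2 + y2" "x1 \<in> X" "y1 \<in> Y" "x2 \<in> X" "y2 \<in> Y"
    by (auto elim!: set_plus_elim)
  then show "a + b \<in> X + Y"
    using set_plus_intro[OF submod_add[OF X] submod_add[OF Y]] by (simp add: add_ac)
next
  fix g a assume g: "g \<in> G" and "a \<in> X + Y"
  then obtain x y where "a = x + y" "x \<in> X" "y \<in> Y" by (auto elim: set_plus_elim)
  then show "g * a \<in> X + Y"
    using set_plus_intro[OF submod_mult[OF X g] submod_mult[OF Y g]] by (simp add: distrib_left)
qed

lemma submod_image_mult_right: "submod X \<Longrightarrow> submod ((\<lambda>x. x * s) ` X)"
  unfolding left_submod_def
  by (auto simp: image_iff distrib_right[symmetric] mult.assoc[symmetric]) (metis mult_zero_left)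

lemma submod_preimage_mult_right:
  "submod D \<Longrightarrow> submod Y \<Longrightarrow> submod {z \<in> D. z * s \<in> Y}"
  unfolding left_submod_def by (auto simp: distrib_right mult.assoc)

lemma submod_setmul: "(\<And>g x. g \<in> G \<Longrightarrow> x \<in> X \<Longrightarrow> g * x \<in> X) \<Longrightarrow> submod (setmul X Y)"
  unfolding left_submod_def using setmul_zero setmul_add setmul_mult_left by metis

lemma subspace_preimage_mult_right: "subspace W \<Longrightarrow> subspace {z. z * f \<in> W}"
  unfolding subspace_def by (auto simp: distrib_right smult_mult_left[symmetric])

lemma subspace_preimage_mult_left: "subspace W \<Longrightarrow> subspace {z. f * z \<in> W}"
  unfolding subspace_def by (auto simp: distrib_left smult_mult_right[symmetric])

lemma mult_left_mem_span_plus: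
  assumes W: "subspace W" and "c \<in> span B + I"
    and "\<And>b. b \<in> B \<Longrightarrow> f * b \<in> W" "\<And>r. r \<in> I \<Longrightarrow> f * r \<in> W"
  shows "f * c \<in> W"
proof -
  obtain z r where zr: "c = z + r" "z \<in> span B" "r \<in> I" using assms(2) by (rule set_plus_elim)
  have "span B \<subseteq> {z. f * z \<in> W}"
    using assms(3) by (intro span_minimal subspace_preimage_mult_left[OF W]) blast
  then have "f * z + f * r \<in> W" using zr(2,3) assms(4) subspace_add[OF W] by blast
  then show ?thesis using zr(1) by (simp add: distrib_left)
qed

lemma mult_right_mem_span_plus:
  assumes W: "subspace W" and "c \<in> span B + I"
    and "\<And>b. b \<in> B \<Longrightarrow> b * f \<in> W" "\<And>r. r \<in> I \<Longrightarrow> r * f \<in> W"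
  shows "c * f \<in> W"
proof -
  obtain z r where zr: "c = z + r" "z \<in> span B" "r \<in> I" using assms(2) by (rule set_plus_elim)
  have "span B \<subseteq> {z. z * f \<in> W}"
    using assms(3) by (intro span_minimal subspace_preimage_mult_right[OF W]) blast
  then have "z * f + r * f \<in> W" using zr(2,3) assms(4) subspace_add[OF W] by blast
  then show ?thesis using zr(1) by (simp add: distrib_right)
qed

lemma fin_codim_iff: "fin_codim smult G m \<longleftrightarrow> fin_dim_mod G m"
  unfolding fin_codim_def fin_dim_mod_def spans_mod_def
  by (auto simp: mem_span_plus_iff subset_iff)

subsection \<open>Two-sided ideals and their powers\<close>

abbreviation ideal :: "'a set \<Rightarrow> bool" where
  "ideal I \<equiv> two_sided_ideal G I"

abbreviation ipow :: "'a set \<Rightarrow> nat \<Rightarrow> 'a set" where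
  "ipow m j \<equiv> idealpow G m j"

lemma ideal_subset: "ideal I \<Longrightarrow> I \<subseteq> G"
  and ideal_zero: "ideal I \<Longrightarrow> 0 \<in> I"
  and ideal_add: "ideal I \<Longrightarrow> x \<in> I \<Longrightarrow> y \<in> I \<Longrightarrow> x + y \<in> I"
  and ideal_mult_left: "ideal I \<Longrightarrow> g \<in> G \<Longrightarrow> x \<in> I \<Longrightarrow> g * x \<in> I"
  and ideal_mult_right: "ideal I \<Longrightarrow> g \<in> G \<Longrightarrow> x \<in> I \<Longrightarrow> x * g \<in> I"
  unfolding two_sided_ideal_def by blast+

lemma ideal_submod: "ideal I \<Longrightarrow> submod I"
  unfolding two_sided_ideal_def left_submod_def by blast

lemma ideal_G: "ideal G"
  unfolding two_sided_ideal_def using G_zero G_add G_mult by blast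

lemma maximal_ideal_ideal: "maximal_ideal G m \<Longrightarrow> ideal m"
  unfolding maximal_ideal_def by blast

lemma cfs_maximal_ideal: "m \<in> cfs smult G \<Longrightarrow> maximal_ideal G m"
  unfolding cfs_def by blast

lemma cfs_ideal: "m \<in> cfs smult G \<Longrightarrow> ideal m"
  using cfs_maximal_ideal maximal_ideal_ideal by blast

lemma cfs_fin_dim_mod: "m \<in> cfs smult G \<Longrightarrow> fin_dim_mod G m"
  unfolding cfs_def fin_codim_iff by blast

lemma ideal_setmul:
  assumes X: "ideal X" and Y: "ideal Y"
  shows "ideal (setmul X Y)"
  unfolding two_sided_ideal_def
proof (intro conjI ballI)
  show "setmul X Y \<subseteq> G"
    using ideal_subset[OF X] ideal_subset[OF Y] by (intro setmul_least) (auto intro: G_zero G_add G_mult)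
qed (auto intro: setmul_zero setmul_add setmul_mult_left setmul_mult_right
      ideal_mult_left[OF X] ideal_mult_right[OF Y])

lemma ideal_ipow: "ideal m \<Longrightarrow> ideal (ipow m j)"
  by (induction j) (auto simp: ideal_G ideal_setmul)

lemma setmul_G_ideal: "ideal I \<Longrightarrow> setmul G I = I"
proof
  assume I: "ideal I"
  show "setmul G I \<subseteq> I" by (rule setmul_least) (use I ideal_zero ideal_add ideal_mult_left in blast)+
  show "I \<subseteq> setmul G I" using setmul_mult[OF G_one, of _ I] by auto
qed

lemma setmul_ideal_G: "ideal I \<Longrightarrow> setmul I G = I"
proof
  assume I: "ideal I"
  show "setmul I G \<subseteq> I" by (rule setmul_least) (use I ideal_zero ideal_add ideal_mult_right in blast)+
  show "I \<subseteq> setmul I G" using setmul_mult[OF _ G_one, of _ I] by auto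
qed

lemma ipow_one: "ideal m \<Longrightarrow> ipow m (Suc 0) = m"
  by (simp add: setmul_ideal_G)

lemma ipow_Suc_subset: "ideal m \<Longrightarrow> ipow m (Suc j) \<subseteq> ipow m j"
  using setmul_mono[OF ideal_subset subset_refl, of m "ipow m j"] setmul_G_ideal[OF ideal_ipow] by auto

lemma ipow_antimono:
  assumes "ideal m" "i \<le> j"
  shows "ipow m j \<subseteq> ipow m i"
  using assms(2) by (induction j rule: dec_induct) (use ipow_Suc_subset[OF assms(1)] in blast)+

lemma power_mem_ipow: "ideal m \<Longrightarrow> x \<in> m \<Longrightarrow> x ^ j \<in> ipow m j"
  by (induction j) (simp_all add: G_one setmul_mult)

lemma one_minus_power_mem:
  assumes J: "ideal J" and "x \<in> G" "1 - x \<in> J"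
  shows "1 - x ^ j \<in> J"
proof (induction j)
  case (Suc j)
  have eq: "1 - x ^ Suc j = (1 - x) + x * (1 - x ^ j)" by (simp add: algebra_simps)
  show ?case unfolding eq by (rule ideal_add[OF J assms(3) ideal_mult_left[OF J assms(2) Suc]])
qed (simp add: ideal_zero[OF J])

lemma ideal_set_plus:
  assumes I: "ideal I" and J: "ideal J"
  shows "ideal (I + J)"
proof -
  have "submod (I + J)" by (rule submod_set_plus[OF ideal_submod[OF I] ideal_submod[OF J]])
  moreover have "I + J \<subseteq> G" by (rule set_plus_subset[OF subspace_G ideal_subset[OF I] ideal_subset[OF J]])
  moreover have "x * g \<in> I + J" if g: "g \<in> G" and x: "x \<in> I + J" for g x
  proof -
    obtain a b where "x = a + b" "a \<in> I" "b \<in> J" using x by (rule set_plus_elim)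
    then show ?thesis
      using set_plus_intro[OF ideal_mult_right[OF I g] ideal_mult_right[OF J g]]
      by (simp add: distrib_right)
  qed
  ultimately show ?thesis unfolding two_sided_ideal_def left_submod_def by blast
qed

lemma maximal_ideals_comaximal:
  assumes n: "maximal_ideal G n" and p: "maximal_ideal G p" and "n \<noteq> p"
  obtains x where "x \<in> n" "1 - x \<in> p"
proof -
  have I: "ideal n" "ideal p" using n p maximal_ideal_ideal by auto
  have "n \<subseteq> n + p" by (rule subset_set_plus_left[OF ideal_zero[OF I(2)]])
  moreover have "p \<subseteq> n + p" by (rule set_zero_plus2[OF ideal_zero[OF I(1)]])
  ultimately have "n + p = G"
    using n p \<open>n \<noteq> p\<close> ideal_set_plus[OF I] unfolding maximal_ideal_def by metis
  then have "1 \<in> n + p" using G_one by simp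
  then obtain a b where "1 = a + b" "a \<in> n" "b \<in> p" by (rule set_plus_elim)
  then show ?thesis using that[of a] by (metis add_diff_cancel_left')
qed

lemma ipow_comaximal:
  assumes n: "maximal_ideal G n" and p: "maximal_ideal G p" and "n \<noteq> p"
  obtains e where "e \<in> ipow n i" "1 - e \<in> ipow p j"
proof -
  have I: "ideal n" "ideal p" using n p maximal_ideal_ideal by auto
  obtain x where x: "x \<in> n" "1 - x \<in> p" using maximal_ideals_comaximal[OF assms] .
  let ?y = "1 - x ^ i"
  have y: "?y \<in> p" using one_minus_power_mem[OF I(2) _ x(2)] x(1) ideal_subset[OF I(1)] by blast
  have "1 - ?y \<in> ipow n i" using power_mem_ipow[OF I(1) x(1)] by simp
  then have "1 - ?y ^ j \<in> ipow n i"
    using one_minus_power_mem[OF ideal_ipow[OF I(1)]] y ideal_subset[OF I(2)] by blast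
  moreover have "1 - (1 - ?y ^ j) \<in> ipow p j" using power_mem_ipow[OF I(2) y] by simp
  ultimately show ?thesis by (rule that)
qed

lemma chinese_remainder:
  assumes "finite F" "maximal_ideal G p" "\<forall>n\<in>F. maximal_ideal G n \<and> n \<noteq> p"
  obtains e where "e \<in> G" "\<forall>n\<in>F. e \<in> ipow n (j n)" "1 - e \<in> ipow p i"
  using assms(1,3)
proof (induction F arbitrary: thesis rule: finite_induct)
  case empty
  then show ?case using G_one ideal_zero[OF ideal_ipow[OF maximal_ideal_ideal[OF assms(2)]]] by simp
next
  case (insert n F)
  have P: "ideal (ipow p i)" using ideal_ipow maximal_ideal_ideal assms(2) by blast
  obtain e where e: "e \<in> G" "\<forall>n\<in>F. e \<in> ipow n (j n)" "1 - e \<in> ipow p i"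
    using insert.IH insert.prems(2) by blast
  have n: "maximal_ideal G n" "n \<noteq> p" using insert.prems(2) by auto
  obtain f where f: "f \<in> ipow n (j n)" "1 - f \<in> ipow p i"
    using ipow_comaximal[OF n(1) assms(2) n(2)] .
  have N: "ideal (ipow n (j n))" using ideal_ipow maximal_ideal_ideal n(1) by blast
  have fG: "f \<in> G" using f(1) ideal_subset[OF N] by blast
  have "\<forall>n'\<in>insert n F. f * e \<in> ipow n' (j n')"
    using ideal_mult_right[OF N e(1) f(1)] e(2) insert.prems(2) fG
    by (auto intro: ideal_mult_left[OF ideal_ipow[OF maximal_ideal_ideal]])
  moreover have "1 - f * e = (1 - f) + f * (1 - e)" by (simp add: algebra_simps)
  then have "1 - f * e \<in> ipow p i" using ideal_add[OF P f(2) ideal_mult_left[OF P fG e(3)]] by metis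
  ultimately show ?case using insert.prems(1) G_mult[OF fG e(1)] by blast
qed

subsection \<open>Finite-dimensionality of double cosets modulo \<open>A m\<^sup>k\<close>\<close>

definition left_span :: "'a set \<Rightarrow> 'a set" where
  "left_span F = {\<Sum>f\<in>F. c f * f | c. \<forall>f\<in>F. c f \<in> G}"

lemma left_spanI: "(\<And>f. f \<in> F \<Longrightarrow> c f \<in> G) \<Longrightarrow> (\<Sum>f\<in>F. c f * f) \<in> left_span F"
  unfolding left_span_def by blast

lemma left_spanE:
  assumes "x \<in> left_span F"
  obtains c where "\<forall>f\<in>F. c f \<in> G" "x = (\<Sum>f\<in>F. c f * f)"
  using assms unfolding left_span_def by blast

lemma left_ideal_left_span:
  assumes "F \<subseteq> G"
  shows "left_ideal G (left_span F)"
  unfolding left_ideal_def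
proof (intro conjI ballI)
  show "left_span F \<subseteq> G"
    using assms by (auto elim!: left_spanE intro!: subspace_sum[OF subspace_G] G_mult)
  show "0 \<in> left_span F" using left_spanI[of F "\<lambda>_. 0"] G_zero by simp
next
  fix x y assume x: "x \<in> left_span F" and y: "y \<in> left_span F"
  obtain c where "\<forall>f\<in>F. c f \<in> G" "x = (\<Sum>f\<in>F. c f * f)" using x by (rule left_spanE)
  moreover obtain d where "\<forall>f\<in>F. d f \<in> G" "y = (\<Sum>f\<in>F. d f * f)" using y by (rule left_spanE)
  ultimately show "x + y \<in> left_span F"
    using left_spanI[of F "\<lambda>f. c f + d f"] by (simp add: G_add distrib_right sum.distrib)
next
  fix g x assume g: "g \<in> G" and x: "x \<in> left_span F"
  obtain c where "\<forall>f\<in>F. c f \<in> G" "x = (\<Sum>f\<in>F. c f * f)" using x by (rule left_spanE)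
  then show "g * x \<in> left_span F"
    using g left_spanI[of F "\<lambda>f. g * c f"] by (simp add: G_mult sum_distrib_left mult.assoc)
qed

lemma mem_left_span:
  assumes "finite F" "f \<in> F"
  shows "f \<in> left_span F"
proof -
  have "(\<Sum>x\<in>F. (if x = f then 1 else 0) * x) \<in> left_span F"
    using G_zero G_one by (intro left_spanI) simp
  then show ?thesis using assms by (simp add: if_distrib[of "\<lambda>c. c * _"] cong: if_cong)
qed

lemma left_span_least:
  assumes J: "left_ideal G J" and "F \<subseteq> J"
  shows "left_span F \<subseteq> J"
proof -
  have "submod J" using J unfolding left_ideal_def left_submod_def by blast
  then show ?thesis
    using J assms(2) unfolding left_ideal_def by (auto elim!: left_spanE intro!: submod_sum)
qed

lemma left_ideal_finitely_generated:
  assumes noeth: "noetherian G" and J: "left_ideal G J"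
  obtains F where "finite F" "F \<subseteq> J" "J \<subseteq> left_span F"
proof -
  note generated = that
  have JG: "J \<subseteq> G" using J unfolding left_ideal_def by blast
  show ?thesis
  proof (rule ccontr)
    assume none: "\<not> thesis"
    have "\<exists>x. x \<in> J \<and> x \<notin> left_span S" if S: "finite S" "S \<subseteq> J" for S
      using none generated[OF S] by blast
    then obtain next_gen where next_gen: "\<And>S. finite S \<Longrightarrow> S \<subseteq> J \<Longrightarrow> next_gen S \<in> J \<and> next_gen S \<notin> left_span S"
      by metis
    define S where "S = rec_nat {} (\<lambda>_ S. insert (next_gen S) S)"
    have S_Suc: "S (Suc i) = insert (next_gen (S i)) (S i)" for i unfolding S_def by simp
    have S: "finite (S i) \<and> S i \<subseteq> J" for i
      by (induction i) (simp_all add: S_def next_gen)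
    have chain: "left_ideal G (left_span (S i)) \<and> left_span (S i) \<subseteq> left_span (S (Suc i))" for i
    proof
      show "left_ideal G (left_span (S i))" using S JG by (intro left_ideal_left_span) blast
      have "S i \<subseteq> S (Suc i)" by (auto simp: S_Suc)
      then have "S i \<subseteq> left_span (S (Suc i))" using mem_left_span S[of "Suc i"] by blast
      then show "left_span (S i) \<subseteq> left_span (S (Suc i))"
        using left_ideal_left_span S JG by (intro left_span_least) blast+
    qed
    have "\<exists>N. \<forall>i\<ge>N. left_span (S i) = left_span (S N)"
      by (rule mp[OF spec[OF conjunct1[OF noeth[unfolded noetherian_def]], of "\<lambda>i. left_span (S i)"]])
        (use chain in simp)
    then obtain N where N: "\<forall>i\<ge>N. left_span (S i) = left_span (S N)" ..
    have "left_span (S (Suc N)) = left_span (S N)" using N[rule_format, of "Suc N"] by simp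
    moreover have "next_gen (S N) \<in> left_span (S (Suc N))" using S[of "Suc N"] by (simp add: mem_left_span S_Suc)
    ultimately show False using next_gen S by blast
  qed
qed

lemma fin_dim_mod_ipow:
  assumes noeth: "noetherian G" and m: "ideal m" and fd: "fin_dim_mod G m"
  shows "fin_dim_mod G (ipow m k)"
proof (induction k)
  case 0
  have "spans_mod G G {}" unfolding spans_mod_def by (simp add: set_zero_plus2)
  then show ?case unfolding fin_dim_mod_def by auto
next
  case (Suc k)
  obtain Bk where Bk: "finite Bk" "Bk \<subseteq> G" "G \<subseteq> span Bk + ipow m k"
    using Suc unfolding fin_dim_mod_def spans_mod_def by blast
  obtain B1 where B1: "finite B1" "B1 \<subseteq> G" "G \<subseteq> span B1 + m"
    using fd unfolding fin_dim_mod_def spans_mod_def by blast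
  have Mk: "ideal (ipow m k)" and MS: "ideal (ipow m (Suc k))" using ideal_ipow[OF m] by blast+
  obtain F where F: "finite F" "F \<subseteq> ipow m k" "ipow m k \<subseteq> left_span F"
    using left_ideal_finitely_generated[OF noeth] Mk
    unfolding two_sided_ideal_def left_ideal_def by metis
  define B where "B = Bk \<union> (\<lambda>(b, f). b * f) ` (B1 \<times> F)"
  let ?W = "span B + ipow m (Suc k)"
  have W: "subspace ?W" by (rule subspace_set_plus[OF subspace_span submod_subspace[OF ideal_submod[OF MS]]])
  have BW: "span B \<subseteq> ?W" by (rule subset_set_plus_left[OF ideal_zero[OF MS]])
  have cf: "c * f \<in> ?W" if "c \<in> G" "f \<in> F" for c f
  proof (rule mult_right_mem_span_plus[OF W])
    show "c \<in> span B1 + m" using B1(3) \<open>c \<in> G\<close> by blast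
    show "b * f \<in> ?W" if "b \<in> B1" for b
    proof -
      have "b * f \<in> B" using \<open>f \<in> F\<close> that unfolding B_def by (auto intro!: rev_image_eqI[of "(b, f)"])
      then show ?thesis using BW span_superset by blast
    qed
    show "r * f \<in> ?W" if "r \<in> m" for r
      using setmul_mult[OF that] F(2) \<open>f \<in> F\<close> set_zero_plus2[OF span_zero, of "ipow m (Suc k)" B] by auto
  qed
  have "left_span F \<subseteq> ?W"
  proof
    fix y assume "y \<in> left_span F"
    then obtain c where c: "\<forall>f\<in>F. c f \<in> G" "y = (\<Sum>f\<in>F. c f * f)" by (rule left_spanE)
    show "y \<in> ?W" unfolding c(2) using cf c(1) by (intro subspace_sum[OF W]) blast
  qed
  then have "ipow m k \<subseteq> ?W" using F(3) by blast
  moreover have "span Bk \<subseteq> ?W" using BW span_mono[of Bk B] unfolding B_def by blast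
  ultimately have "span Bk + ipow m k \<subseteq> ?W" using set_plus_subset[OF W] by blast
  moreover have "B \<subseteq> G" using Bk(2) B1(2) F(2) ideal_subset[OF Mk] unfolding B_def by (auto intro!: G_mult)
  moreover have "finite B" using Bk(1) B1(1) F(1) unfolding B_def by simp
  ultimately show ?case using Bk(3) unfolding fin_dim_mod_def spans_mod_def by blast
qed

lemma submod_dbl: "submod (dbl G a Y)"
  unfolding dbl_def by (intro submod_setmul setmul_mult_left) (auto intro: G_mult)

lemma dbl_mult_right: "g \<in> G \<Longrightarrow> s \<in> dbl G a G \<Longrightarrow> s * g \<in> dbl G a G"
  unfolding dbl_def by (rule setmul_mult_right) (auto intro: G_mult)

lemma mem_dbl: "g \<in> G \<Longrightarrow> h \<in> G \<Longrightarrow> g * a * h \<in> dbl G a G"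
  unfolding dbl_def by (intro setmul_mult) auto

lemma submod_Aideal: "submod (Aideal G m k)"
  unfolding Aideal_def by (rule submod_setmul) simp

lemma fin_dim_mod_double_coset:
  assumes noeth: "noetherian G" and qc: "quasicentral G" and m: "ideal m" and fd: "fin_dim_mod G m"
  shows "fin_dim_mod (dbl G a G + Aideal G m k) (Aideal G m k)"
proof -
  let ?D = "dbl G a G" and ?L = "Aideal G m k"
  have "fg_right G ?D" using qc unfolding quasicentral_def by blast
  then obtain F where "finite F \<and> F \<subseteq> ?D \<and> ?D = {\<Sum>f\<in>F. f * c f | c. \<forall>f\<in>F. c f \<in> G}"
    unfolding fg_right_def by (rule exE)
  then have F: "finite F" "F \<subseteq> ?D" "?D = {\<Sum>f\<in>F. f * c f | c. \<forall>f\<in>F. c f \<in> G}" by auto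
  obtain Bk where Bk: "finite Bk" "Bk \<subseteq> G" "G \<subseteq> span Bk + ipow m k"
    using fin_dim_mod_ipow[OF noeth m fd] unfolding fin_dim_mod_def spans_mod_def by blast
  define S where "S = (\<lambda>(f, b). f * b) ` (F \<times> Bk)"
  let ?W = "span S + ?L"
  have W: "subspace ?W" by (rule subspace_set_plus[OF subspace_span submod_subspace[OF submod_Aideal]])
  have LW: "?L \<subseteq> ?W" by (rule set_zero_plus2[OF span_zero])
  have SW: "span S \<subseteq> ?W" by (rule subset_set_plus_left[OF submod_zero[OF submod_Aideal]])
  have fc: "f * c \<in> ?W" if "f \<in> F" "c \<in> G" for f c
  proof (rule mult_left_mem_span_plus[OF W])
    show "c \<in> span Bk + ipow m k" using Bk(3) \<open>c \<in> G\<close> by blast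
    show "f * b \<in> ?W" if "b \<in> Bk" for b
    proof -
      have "f * b \<in> S" using \<open>f \<in> F\<close> that unfolding S_def by (auto intro!: rev_image_eqI[of "(f, b)"])
      then show ?thesis using SW span_superset by blast
    qed
    show "f * r \<in> ?W" if "r \<in> ipow m k" for r
      using setmul_mult[OF _ that] LW unfolding Aideal_def by blast
  qed
  have "?D \<subseteq> ?W"
  proof
    fix d assume "d \<in> ?D"
    then obtain c where c: "\<forall>f\<in>F. c f \<in> G" "d = (\<Sum>f\<in>F. f * c f)" using F(3) by blast
    show "d \<in> ?W" unfolding c(2) using fc c(1) by (intro subspace_sum[OF W]) blast
  qed
  then have "?D + ?L \<subseteq> ?W" using set_plus_subset[OF W _ LW] by blast
  moreover have "S \<subseteq> ?D + ?L"
  proof -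
    have "S \<subseteq> ?D" using F(2) Bk(2) unfolding S_def by (auto intro!: dbl_mult_right)
    then show ?thesis using subset_set_plus_left[OF submod_zero[OF submod_Aideal], of ?D] by blast
  qed
  moreover have "finite S" using F(1) Bk(1) unfolding S_def by simp
  ultimately show ?thesis unfolding fin_dim_mod_def spans_mod_def by blast
qed

subsection \<open>Simple subquotients and their annihilators\<close>

definition simple_subquot :: "'a set \<Rightarrow> 'a set \<Rightarrow> bool" where
  "simple_subquot X Y \<longleftrightarrow> submod X \<and> submod Y \<and> X \<subseteq> Y \<and> X \<noteq> Y \<and>
     (\<forall>W. submod W \<and> X \<subseteq> W \<and> W \<subseteq> Y \<longrightarrow> W = X \<or> W = Y)"

lemma simple_subquotD:
  "simple_subquot X Y \<Longrightarrow> submod W \<Longrightarrow> X \<subseteq> W \<Longrightarrow> W \<subseteq> Y \<Longrightarrow> W = X \<or> W = Y"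
  unfolding simple_subquot_def by blast

lemma simple_subquot_image_cases:
  assumes TU: "simple_subquot T U" and X: "submod X" "X \<subseteq> G" and s: "s \<in> U"
  shows "(\<lambda>x. x * s) ` X + T = T \<or> (\<lambda>x. x * s) ` X + T = U"
proof (rule simple_subquotD[OF TU])
  have T: "submod T" and U: "submod U" and "T \<subseteq> U" using TU unfolding simple_subquot_def by auto
  show "submod ((\<lambda>x. x * s) ` X + T)" using submod_set_plus[OF submod_image_mult_right[OF X(1)] T] .
  show "T \<subseteq> (\<lambda>x. x * s) ` X + T"
    using set_zero_plus2 submod_zero[OF X(1)] by (metis image_eqI mult_zero_left)
  have "(\<lambda>x. x * s) ` X \<subseteq> U" using submod_mult[OF U _ s] X(2) by blast
  then show "(\<lambda>x. x * s) ` X + T \<subseteq> U"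
    using set_plus_subset[OF submod_subspace[OF U]] \<open>T \<subseteq> U\<close> by blast
qed

definition annihilator :: "'a set \<Rightarrow> 'a set \<Rightarrow> 'a set" where
  "annihilator T S = {g \<in> G. \<forall>s\<in>S. g * s \<in> T}"

lemma submod_annihilator: "submod T \<Longrightarrow> submod (annihilator T S)"
  unfolding left_submod_def annihilator_def
  using G_zero G_add G_mult by (auto simp: distrib_right mult.assoc)

lemma annihilator_insert: "annihilator T (insert s S) = {g \<in> annihilator T S. g * s \<in> T}"
  unfolding annihilator_def by blast

lemma annihilator_span_plus:
  assumes T: "submod T" and "U \<subseteq> span B + T" "B \<subseteq> U"
  shows "annihilator T B = annihilator T U"
proof
  show "annihilator T U \<subseteq> annihilator T B" using assms(3) unfolding annihilator_def by blast
  show "annihilator T B \<subseteq> annihilator T U"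
  proof
    fix g assume g: "g \<in> annihilator T B"
    have "span B + T \<subseteq> {u. g * u \<in> T}"
    proof (rule span_plus_least)
      show "subspace {u. g * u \<in> T}" by (rule subspace_preimage_mult_left[OF submod_subspace[OF T]])
      show "B \<subseteq> {u. g * u \<in> T}" using g unfolding annihilator_def by blast
      show "T \<subseteq> {u. g * u \<in> T}" using submod_mult[OF T] g unfolding annihilator_def by blast
    qed
    then show "g \<in> annihilator T U" using g assms(2) unfolding annihilator_def by blast
  qed
qed

lemma ideal_annihilator:
  assumes "submod T" "submod U" "T \<subseteq> U"
  shows "ideal (annihilator T U)"
  using assms submod_annihilator[OF assms(1), of U] submod_mult[OF assms(2)]
  unfolding two_sided_ideal_def left_submod_def annihilator_def
  by (auto intro: G_mult simp: mult.assoc)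

lemma fin_dim_mod_annihilator_insert:
  assumes T: "submod T" and U: "submod U" and s: "s \<in> U" and A: "submod A" "A \<subseteq> G"
    and F: "finite F" "F \<subseteq> G" "G \<subseteq> span F + A" and AU: "(\<lambda>x. x * s) ` A + T = U"
    and B: "finite B" "B \<subseteq> U" "U \<subseteq> span B + T"
  shows "fin_dim_mod G {g \<in> A. g * s \<in> T}"
proof -
  let ?A' = "{g \<in> A. g * s \<in> T}"
  have A': "submod ?A'" by (rule submod_preimage_mult_right[OF A(1) T])
  have "\<exists>a. a \<in> A \<and> a * s - b \<in> T" if "b \<in> B" for b
  proof -
    have "b \<in> (\<lambda>x. x * s) ` A + T" using AU B(2) that by blast
    then obtain a t where "b = a * s + t" "a \<in> A" "t \<in> T" by (auto elim: set_plus_elim)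
    then show ?thesis using submod_minus[OF T] by force
  qed
  then obtain a where a: "\<And>b. b \<in> B \<Longrightarrow> a b \<in> A \<and> a b * s - b \<in> T" by metis
  define F' where "F' = F \<union> a ` B"
  let ?W = "span F' + ?A'"
  have W: "subspace ?W" by (rule subspace_set_plus[OF subspace_span submod_subspace[OF A']])
  have "G \<subseteq> ?W"
  proof
    fix g assume "g \<in> G"
    then obtain y r where yr: "g = y + r" "y \<in> span F" "r \<in> A" using F(3) by (blast elim: set_plus_elim)
    have "r * s \<in> U" using submod_mult[OF U _ s] yr(3) A(2) by auto
    then obtain c where c: "r * s - (\<Sum>b\<in>B. smult (c b) b) \<in> T"
      using B(3) mem_span_plus_iff[OF B(1)] by blast
    let ?q = "\<Sum>b\<in>B. smult (c b) (a b)"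
    have "?q \<in> A" using a by (intro submod_sum[OF A(1)] submod_smult[OF A(1)]) blast
    have "?q \<in> span F'" unfolding F'_def by (intro span_sum span_scale span_base) blast
    have "(r - ?q) * s = (r * s - (\<Sum>b\<in>B. smult (c b) b)) - (\<Sum>b\<in>B. smult (c b) (a b * s - b))"
      by (simp add: algebra_simps sum_distrib_right smult_mult_left sum_subtractf)
    moreover have "(\<Sum>b\<in>B. smult (c b) (a b * s - b)) \<in> T"
      using a by (intro submod_sum[OF T] submod_smult[OF T]) blast
    ultimately have "(r - ?q) * s \<in> T" using submod_diff[OF T c] by simp
    then have "r - ?q \<in> ?A'" using submod_diff[OF A(1) yr(3) \<open>?q \<in> A\<close>] by blast
    moreover have "y + ?q \<in> span F'"
      using yr(2) \<open>?q \<in> span F'\<close> span_mono[of F F'] unfolding F'_def by (blast intro: span_add)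
    ultimately have "(y + ?q) + (r - ?q) \<in> ?W" by (rule set_plus_intro[rotated])
    then show "g \<in> ?W" using yr(1) by simp
  qed
  moreover have "finite F'" "F' \<subseteq> G" using F(1,2) B(1) a A(2) unfolding F'_def by auto
  ultimately show ?thesis unfolding fin_dim_mod_def spans_mod_def by blast
qed

lemma fin_dim_mod_annihilator:
  assumes TU: "simple_subquot T U" and fd: "fin_dim_mod U T" and "finite S" "S \<subseteq> U"
  shows "fin_dim_mod G (annihilator T S)"
  using assms(3,4)
proof (induction S rule: finite_induct)
  case empty
  have "annihilator T {} = G" unfolding annihilator_def by blast
  then show ?case unfolding fin_dim_mod_def spans_mod_def by (auto simp: set_zero_plus2)
next
  case (insert s S)
  have T: "submod T" and U: "submod U" using TU unfolding simple_subquot_def by auto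
  have A: "submod (annihilator T S)" "annihilator T S \<subseteq> G"
    using submod_annihilator[OF T] unfolding annihilator_def by auto
  have s: "s \<in> U" using insert.prems by blast
  consider "(\<lambda>x. x * s) ` annihilator T S + T = T" | "(\<lambda>x. x * s) ` annihilator T S + T = U"
    using simple_subquot_image_cases[OF TU A s] by blast
  then show ?case
  proof cases
    case 1
    then have "annihilator T (insert s S) = annihilator T S"
      using set_plus_intro[of _ "(\<lambda>x. x * s) ` annihilator T S" 0 T] submod_zero[OF T]
      unfolding annihilator_insert by fastforce
    then show ?thesis using insert by simp
  next
    case 2
    obtain F where F: "finite F" "F \<subseteq> G" "G \<subseteq> span F + annihilator T S"
      using insert unfolding fin_dim_mod_def spans_mod_def by blast
    obtain B where B: "finite B" "B \<subseteq> U" "U \<subseteq> span B + T"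
      using fd unfolding fin_dim_mod_def spans_mod_def by blast
    show ?thesis
      unfolding annihilator_insert by (rule fin_dim_mod_annihilator_insert[OF T U s A F 2 B])
  qed
qed

definition no_factor_killed :: "'a set \<Rightarrow> 'a set \<Rightarrow> 'a set \<Rightarrow> bool" where
  "no_factor_killed I N' N \<longleftrightarrow> (\<forall>X Y. submod X \<and> submod Y \<and> N' \<subseteq> X \<and> X \<subseteq> Y \<and> Y \<subseteq> N \<and>
      (\<forall>i\<in>I. \<forall>y\<in>Y. i * y \<in> X) \<longrightarrow> Y \<subseteq> X)"

lemma no_factor_killedD:
  "no_factor_killed I N' N \<Longrightarrow> submod X \<Longrightarrow> submod Y \<Longrightarrow> N' \<subseteq> X \<Longrightarrow> X \<subseteq> Y \<Longrightarrow> Y \<subseteq> N \<Longrightarrow>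
    (\<And>i y. i \<in> I \<Longrightarrow> y \<in> Y \<Longrightarrow> i * y \<in> X) \<Longrightarrow> Y \<subseteq> X"
  unfolding no_factor_killed_def by blast

lemma no_factor_killed_trans:
  assumes K: "submod K" and N: "submod N" and "N' \<subseteq> K" "K \<subseteq> N" and IG: "I \<subseteq> G"
    and low: "no_factor_killed I N' K" and high: "no_factor_killed I K N"
  shows "no_factor_killed I N' N"
  unfolding no_factor_killed_def
proof (intro allI impI)
  fix X Y assume "submod X \<and> submod Y \<and> N' \<subseteq> X \<and> X \<subseteq> Y \<and> Y \<subseteq> N \<and> (\<forall>i\<in>I. \<forall>y\<in>Y. i * y \<in> X)"
  then have X: "submod X" and Y: "submod Y" and "N' \<subseteq> X" "X \<subseteq> Y" "Y \<subseteq> N"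
    and IY: "\<And>i y. i \<in> I \<Longrightarrow> y \<in> Y \<Longrightarrow> i * y \<in> X" by auto
  have low_part: "Y \<inter> K \<subseteq> X \<inter> K"
  proof (rule no_factor_killedD[OF low submod_Int[OF X K] submod_Int[OF Y K]])
    show "N' \<subseteq> X \<inter> K" "X \<inter> K \<subseteq> Y \<inter> K" "Y \<inter> K \<subseteq> K"
      using \<open>N' \<subseteq> X\<close> \<open>N' \<subseteq> K\<close> \<open>X \<subseteq> Y\<close> by auto
    fix i y assume "i \<in> I" "y \<in> Y \<inter> K"
    then show "i * y \<in> X \<inter> K" using IY submod_mult[OF K] IG by blast
  qed
  have high_part: "Y + K \<subseteq> X + K"
  proof (rule no_factor_killedD[OF high submod_set_plus[OF X K] submod_set_plus[OF Y K]])
    show "K \<subseteq> X + K" by (rule set_zero_plus2[OF submod_zero[OF X]])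
    show "X + K \<subseteq> Y + K" using \<open>X \<subseteq> Y\<close> by (rule set_plus_mono2) simp
    show "Y + K \<subseteq> N"
      using set_plus_subset[OF submod_subspace[OF N]] \<open>Y \<subseteq> N\<close> \<open>K \<subseteq> N\<close> by blast
    fix i z assume i: "i \<in> I" and "z \<in> Y + K"
    then obtain y k where "z = y + k" "y \<in> Y" "k \<in> K" by (auto elim: set_plus_elim)
    then show "i * z \<in> X + K"
      using set_plus_intro[OF IY[OF i] submod_mult[OF K _ \<open>k \<in> K\<close>]] i IG by (auto simp: distrib_left)
  qed
  show "Y \<subseteq> X"
  proof
    fix y assume y: "y \<in> Y"
    have "y + 0 \<in> X + K" using high_part set_plus_intro[OF y submod_zero[OF K]] by blast
    then obtain x k where xk: "y = x + k" "x \<in> X" "k \<in> K" by (auto elim: set_plus_elim)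
    then have "k \<in> Y" using submod_diff[OF Y y, of x] \<open>X \<subseteq> Y\<close> by auto
    then have "k \<in> X" using low_part xk(3) by blast
    then show "y \<in> X" using xk submod_add[OF X] by blast
  qed
qed

lemma killed_if_image_collapses:
  assumes T: "submod T" and "I \<subseteq> G" and Y: "(\<lambda>y. y * s) ` Y + T = U"
    and X: "(\<lambda>x. x * s) ` X + T = T" and IY: "\<forall>i\<in>I. \<forall>y\<in>Y. i * y \<in> X"
  shows "\<forall>i\<in>I. \<forall>u\<in>U. i * u \<in> T"
proof (intro ballI)
  fix i u assume i: "i \<in> I" and "u \<in> U"
  then obtain y t where yt: "u = y * s + t" "y \<in> Y" "t \<in> T"
    unfolding Y[symmetric] by (auto elim: set_plus_elim)
  have "(i * y) * s + 0 \<in> (\<lambda>x. x * s) ` X + T"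
    using IY i yt(2) submod_zero[OF T] by (intro set_plus_intro imageI) auto
  then have "(i * y) * s \<in> T" using X by simp
  moreover have "i * t \<in> T" using submod_mult[OF T _ yt(3)] i \<open>I \<subseteq> G\<close> by blast
  ultimately show "i * u \<in> T" using yt(1) submod_add[OF T] by (simp add: distrib_left mult.assoc)
qed

lemma no_factor_killed_annihilator_step:
  assumes TU: "simple_subquot T U" and IG: "I \<subseteq> G" and I: "\<not> (\<forall>i\<in>I. \<forall>u\<in>U. i * u \<in> T)"
    and s: "s \<in> U" and A: "submod A" "A \<subseteq> G"
  shows "no_factor_killed I {g \<in> A. g * s \<in> T} A"
  unfolding no_factor_killed_def
proof (intro allI impI)
  let ?A' = "{g \<in> A. g * s \<in> T}"
  let ?img = "\<lambda>X. (\<lambda>x. x * s) ` X + T"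
  fix X Y assume "submod X \<and> submod Y \<and> ?A' \<subseteq> X \<and> X \<subseteq> Y \<and> Y \<subseteq> A \<and> (\<forall>i\<in>I. \<forall>y\<in>Y. i * y \<in> X)"
  then have X: "submod X" and Y: "submod Y" and "?A' \<subseteq> X" "X \<subseteq> Y" "Y \<subseteq> A"
    and IY: "\<forall>i\<in>I. \<forall>y\<in>Y. i * y \<in> X" by auto
  have T: "submod T" using TU unfolding simple_subquot_def by blast
  have ys: "y * s \<in> ?img Y" if "y \<in> Y" for y
    using set_plus_intro[OF imageI[OF that] submod_zero[OF T]] by simp
  have img_cases: "?img Z = T \<or> ?img Z = U" if "submod Z" "Z \<subseteq> A" for Z
    using simple_subquot_image_cases[OF TU that(1) _ s] that(2) A(2) by blast
  show "Y \<subseteq> X"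
  proof (cases "?img Y = T")
    case True
    then show ?thesis using ys \<open>?A' \<subseteq> X\<close> \<open>Y \<subseteq> A\<close> by blast
  next
    case False
    then have YU: "?img Y = U" using img_cases[OF Y \<open>Y \<subseteq> A\<close>] by blast
    then have "?img X \<noteq> T" using killed_if_image_collapses[OF T IG YU _ IY] I by blast
    then have XU: "?img X = U" using img_cases[OF X] \<open>X \<subseteq> Y\<close> \<open>Y \<subseteq> A\<close> by blast
    show ?thesis
    proof
      fix y assume y: "y \<in> Y"
      then obtain x t where xt: "y * s = x * s + t" "x \<in> X" "t \<in> T"
        using ys[OF y] unfolding YU XU[symmetric] by (auto elim: set_plus_elim)
      then have "(y - x) * s \<in> T" by (simp add: algebra_simps)
      moreover have "y - x \<in> A" using submod_diff[OF A(1)] y xt(2) \<open>X \<subseteq> Y\<close> \<open>Y \<subseteq> A\<close> by blast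
      ultimately have "y - x \<in> X" using \<open>?A' \<subseteq> X\<close> by blast
      then show "y \<in> X" using submod_add[OF X _ xt(2)] by fastforce
    qed
  qed
qed

text \<open>\<open>G / annihilator T S\<close> embeds into a finite power of the simple module \<open>U / T\<close>; so an ideal that
  acts nontrivially on \<open>U / T\<close> kills no nonzero subquotient of it.  This makes the annihilator of a
  simple subquotient maximal.\<close>

lemma no_factor_killed_annihilator:
  assumes TU: "simple_subquot T U" and I: "ideal I" "\<not> (\<forall>i\<in>I. \<forall>u\<in>U. i * u \<in> T)"
    and "finite S" "S \<subseteq> U"
  shows "no_factor_killed I (annihilator T S) G"
  using assms(4,5)
proof (induction S rule: finite_induct)
  case empty
  show ?case unfolding annihilator_def no_factor_killed_def by blast
next
  case (insert s S)
  have T: "submod T" using TU unfolding simple_subquot_def by blast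
  have A: "submod (annihilator T S)" "annihilator T S \<subseteq> G"
    using submod_annihilator[OF T] unfolding annihilator_def by auto
  have "no_factor_killed I (annihilator T (insert s S)) (annihilator T S)"
    unfolding annihilator_insert
    using no_factor_killed_annihilator_step[OF TU ideal_subset[OF I(1)] I(2) _ A] insert.prems by blast
  moreover have "annihilator T (insert s S) \<subseteq> annihilator T S" unfolding annihilator_insert by blast
  ultimately show ?case
    using no_factor_killed_trans[OF A(1) submod_G _ A(2) ideal_subset[OF I(1)]] insert by blast
qed

lemma annihilator_in_cfs:
  assumes TU: "simple_subquot T U" and fd: "fin_dim_mod U T"
  shows "annihilator T U \<in> cfs smult G"
proof -
  let ?P = "annihilator T U"
  have T: "submod T" and U: "submod U" and "T \<subseteq> U" "T \<noteq> U"
    using TU unfolding simple_subquot_def by auto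
  obtain B where B: "finite B" "B \<subseteq> U" "U \<subseteq> span B + T" using fd unfolding fin_dim_mod_def spans_mod_def by blast
  have PB: "annihilator T B = ?P" by (rule annihilator_span_plus[OF T B(3,2)])
  have P: "ideal ?P" by (rule ideal_annihilator[OF T U \<open>T \<subseteq> U\<close>])
  have "?P \<noteq> G"
  proof
    assume "?P = G"
    then have "U \<subseteq> T" using G_one unfolding annihilator_def by force
    then show False using \<open>T \<subseteq> U\<close> \<open>T \<noteq> U\<close> by blast
  qed
  moreover have "J = ?P \<or> J = G" if J: "ideal J" "?P \<subseteq> J" for J
  proof (cases "\<forall>i\<in>J. \<forall>u\<in>U. i * u \<in> T")
    case True
    then have "J \<subseteq> ?P" using ideal_subset[OF J(1)] unfolding annihilator_def by blast
    then show ?thesis using J(2) by blast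
  next
    case False
    have "G \<subseteq> J"
    proof (rule no_factor_killedD[OF _ ideal_submod[OF J(1)] submod_G])
      show "no_factor_killed J ?P G" using no_factor_killed_annihilator[OF TU J(1) False B(1,2)] unfolding PB .
      show "?P \<subseteq> J" "J \<subseteq> G" "G \<subseteq> G" using J ideal_subset[OF J(1)] by auto
      show "\<And>i y. i \<in> J \<Longrightarrow> y \<in> G \<Longrightarrow> i * y \<in> J" using ideal_mult_right[OF J(1)] by blast
    qed
    then show ?thesis using ideal_subset[OF J(1)] by blast
  qed
  ultimately have "maximal_ideal G ?P" unfolding maximal_ideal_def using P by blast
  moreover have "fin_dim_mod G ?P" using fin_dim_mod_annihilator[OF TU fd B(1,2)] unfolding PB .
  ultimately show ?thesis unfolding cfs_def fin_codim_iff by blast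
qed

end

subsection \<open>Splitting extensions between different simple modules\<close>

text \<open>The hypothesis \<open>ext1_vanishes\<close> speaks about modules whose carrier lies in \<open>nat \<Rightarrow> 'k\<close>;
  an additive map \<open>\<phi>\<close> on \<open>V\<close> with kernel \<open>T\<close> transports the subquotient \<open>V/T\<close> there.\<close>

locale quotient_coords = k_subalgebra smult G
  for smult :: "'k::field \<Rightarrow> 'a::ring_1 \<Rightarrow> 'a" and G +
  fixes T V :: "'a set" and \<phi> :: "'a \<Rightarrow> nat \<Rightarrow> 'k"
  assumes T: "submod T" and V: "submod V" and T_V: "T \<subseteq> V"
    and \<phi>_add: "v \<in> V \<Longrightarrow> w \<in> V \<Longrightarrow> \<phi> (v + w) = \<phi> v + \<phi> w"
    and \<phi>_eq_iff: "v \<in> V \<Longrightarrow> w \<in> V \<Longrightarrow> \<phi> v = \<phi> w \<longleftrightarrow> v - w \<in> T"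
begin

definition act :: "'a \<Rightarrow> (nat \<Rightarrow> 'k) \<Rightarrow> (nat \<Rightarrow> 'k)" where
  "act g f = \<phi> (g * (SOME v. v \<in> V \<and> \<phi> v = f))"

abbreviation preimage :: "(nat \<Rightarrow> 'k) set \<Rightarrow> 'a set" where
  "preimage L \<equiv> {v \<in> V. \<phi> v \<in> L}"

lemma \<phi>_zero: "\<phi> 0 = 0"
  using \<phi>_add[OF submod_zero[OF V] submod_zero[OF V]] by simp

lemma \<phi>_eq_0_iff: "v \<in> V \<Longrightarrow> \<phi> v = 0 \<longleftrightarrow> v \<in> T"
  using \<phi>_eq_iff[OF _ submod_zero[OF V]] \<phi>_zero by simp

lemma \<phi>_minus: "v \<in> V \<Longrightarrow> \<phi> (- v) = - \<phi> v"
  using \<phi>_add[OF _ submod_minus[OF V]] \<phi>_zero by (metis add_eq_0_iff2 right_minus)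

lemma \<phi>_diff: "v \<in> V \<Longrightarrow> w \<in> V \<Longrightarrow> \<phi> (v - w) = \<phi> v - \<phi> w"
  using \<phi>_add[OF _ submod_minus[OF V]] \<phi>_minus by (metis diff_conv_add_uminus)

lemma act_\<phi>:
  assumes g: "g \<in> G" and v: "v \<in> V"
  shows "act g (\<phi> v) = \<phi> (g * v)"
proof -
  let ?w = "SOME w. w \<in> V \<and> \<phi> w = \<phi> v"
  have w: "?w \<in> V" "\<phi> ?w = \<phi> v" using someI_ex[of "\<lambda>w. w \<in> V \<and> \<phi> w = \<phi> v"] v by blast+
  then have "g * (?w - v) \<in> T" using \<phi>_eq_iff v submod_mult[OF T g] by blast
  then have "\<phi> (g * ?w) = \<phi> (g * v)"
    using \<phi>_eq_iff submod_mult[OF V g] w(1) v by (simp add: right_diff_distrib)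
  then show ?thesis unfolding act_def .
qed

lemma gmodule: "gmodule G act (\<phi> ` V)"
  unfolding gmodule_def
proof (intro conjI ballI)
  show "0 \<in> \<phi> ` V" using \<phi>_zero submod_zero[OF V] by force
next
  fix x y assume "x \<in> \<phi> ` V" "y \<in> \<phi> ` V"
  then obtain v w where "v \<in> V" "w \<in> V" "x = \<phi> v" "y = \<phi> w" by blast
  then show "x + y \<in> \<phi> ` V" using \<phi>_add submod_add[OF V] by (metis image_eqI)
next
  fix x assume "x \<in> \<phi> ` V"
  then obtain v where "v \<in> V" "x = \<phi> v" by blast
  then show "- x \<in> \<phi> ` V" using \<phi>_minus submod_minus[OF V] by (metis image_eqI)
next
  fix g x assume "g \<in> G" "x \<in> \<phi> ` V"
  then show "act g x \<in> \<phi> ` V" using act_\<phi> submod_mult[OF V] by auto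
next
  fix g h x assume g: "g \<in> G" and h: "h \<in> G" and "x \<in> \<phi> ` V"
  then obtain v where v: "v \<in> V" "x = \<phi> v" by blast
  show "act (g + h) x = act g x + act h x"
    using act_\<phi>[OF G_add[OF g h] v(1)] act_\<phi>[OF g v(1)] act_\<phi>[OF h v(1)]
      \<phi>_add[OF submod_mult[OF V g v(1)] submod_mult[OF V h v(1)]] v(2)
    by (simp add: distrib_right)
  show "act (g * h) x = act g (act h x)"
    using act_\<phi>[OF G_mult[OF g h] v(1)] act_\<phi>[OF h v(1)] act_\<phi>[OF g submod_mult[OF V h v(1)]] v(2)
    by (simp add: mult.assoc)
next
  fix g x y assume g: "g \<in> G" and "x \<in> \<phi> ` V" "y \<in> \<phi> ` V"
  then obtain v w where vw: "v \<in> V" "w \<in> V" "x = \<phi> v" "y = \<phi> w" by blast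
  then show "act g (x + y) = act g x + act g y"
    using act_\<phi>[OF g submod_add[OF V vw(1,2)]] act_\<phi>[OF g vw(1)] act_\<phi>[OF g vw(2)]
      \<phi>_add[OF submod_mult[OF V g vw(1)] submod_mult[OF V g vw(2)]] \<phi>_add[OF vw(1,2)]
    by (simp add: distrib_left)
next
  fix x assume "x \<in> \<phi> ` V"
  then show "act 1 x = x" using act_\<phi>[OF G_one] by auto
qed

lemma gsubmodule_image:
  assumes X: "submod X" "X \<subseteq> V"
  shows "gsubmodule G act (\<phi> ` V) (\<phi> ` X)"
  unfolding gsubmodule_def
proof (intro conjI ballI)
  show "\<phi> ` X \<subseteq> \<phi> ` V" "0 \<in> \<phi> ` X" using X \<phi>_zero submod_zero[OF X(1)] by force+
next
  fix x y assume "x \<in> \<phi> ` X" "y \<in> \<phi> ` X"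
  then obtain v w where "v \<in> X" "w \<in> X" "x = \<phi> v" "y = \<phi> w" by blast
  then show "x + y \<in> \<phi> ` X" using \<phi>_add submod_add[OF X(1)] X(2) by (metis image_eqI subsetD)
next
  fix x assume "x \<in> \<phi> ` X"
  then obtain v where "v \<in> X" "x = \<phi> v" by blast
  then show "- x \<in> \<phi> ` X" using \<phi>_minus submod_minus[OF X(1)] X(2) by (metis image_eqI subsetD)
next
  fix g x assume "g \<in> G" "x \<in> \<phi> ` X"
  then show "act g x \<in> \<phi> ` X" using act_\<phi> submod_mult[OF X(1)] X(2) by auto
qed

lemma preimage_image:
  assumes "submod X" "T \<subseteq> X" "X \<subseteq> V"
  shows "preimage (\<phi> ` X) = X"
proof
  show "X \<subseteq> preimage (\<phi> ` X)" using assms(3) by blast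
  show "preimage (\<phi> ` X) \<subseteq> X"
  proof
    fix v assume "v \<in> preimage (\<phi> ` X)"
    then obtain x where x: "v \<in> V" "x \<in> X" "\<phi> v = \<phi> x" by blast
    then have "v - x \<in> X" using \<phi>_eq_iff assms(2,3) by blast
    then show "v \<in> X" using submod_add[OF assms(1) _ x(2)] by fastforce
  qed
qed

lemma
  assumes L: "gsubmodule G act (\<phi> ` V) L"
  shows submod_preimage: "submod (preimage L)"
    and subset_preimage: "T \<subseteq> preimage L"
    and image_preimage: "\<phi> ` preimage L = L"
proof -
  have L0: "0 \<in> L" and "L \<subseteq> \<phi> ` V" and Ladd: "\<And>a b. a \<in> L \<Longrightarrow> b \<in> L \<Longrightarrow> a + b \<in> L"
    and Lact: "\<And>g a. g \<in> G \<Longrightarrow> a \<in> L \<Longrightarrow> act g a \<in> L"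
    using L unfolding gsubmodule_def by auto
  show "submod (preimage L)"
    unfolding left_submod_def
    using submod_zero[OF V] submod_add[OF V] submod_mult[OF V] \<phi>_zero L0 \<phi>_add Ladd Lact act_\<phi>
    by auto (metis act_\<phi>)
  show "T \<subseteq> preimage L"
  proof
    fix x assume "x \<in> T"
    then have "x \<in> V" "\<phi> x = 0" using T_V \<phi>_eq_0_iff by auto
    then show "x \<in> preimage L" using L0 by simp
  qed
  show "\<phi> ` preimage L = L" using \<open>L \<subseteq> \<phi> ` V\<close> by blast
qed

lemma extension_hypotheses:
  assumes TU: "simple_subquot T U" and UV: "simple_subquot U V" and "n0 \<subseteq> G" "q \<subseteq> G"
    and n0: "\<forall>g\<in>n0. \<forall>u\<in>U. g * u \<in> T" and q: "\<forall>g\<in>q. \<forall>v\<in>V. g * v \<in> U"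
  shows "gmodule G act (\<phi> ` V) \<and> gsubmodule G act (\<phi> ` V) (\<phi> ` U) \<and> \<phi> ` U \<noteq> {0} \<and>
    (\<forall>L. gsubmodule G act (\<phi> ` V) L \<and> L \<subseteq> \<phi> ` U \<longrightarrow> L = {0} \<or> L = \<phi> ` U) \<and>
    (\<forall>g\<in>n0. \<forall>x\<in>\<phi> ` U. act g x = 0) \<and> \<phi> ` U \<noteq> \<phi> ` V \<and>
    (\<forall>L. gsubmodule G act (\<phi> ` V) L \<and> \<phi> ` U \<subseteq> L \<longrightarrow> L = \<phi> ` U \<or> L = \<phi> ` V) \<and>
    (\<forall>g\<in>q. \<forall>x\<in>\<phi> ` V. act g x \<in> \<phi> ` U)"
proof (intro conjI allI impI ballI)
  have U: "submod U" and "T \<subseteq> U" "T \<noteq> U" "U \<subseteq> V" "U \<noteq> V"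
    using TU UV unfolding simple_subquot_def by auto
  show "gmodule G act (\<phi> ` V)" by (rule gmodule)
  show "gsubmodule G act (\<phi> ` V) (\<phi> ` U)" using gsubmodule_image[OF U \<open>U \<subseteq> V\<close>] .
  show "\<phi> ` U \<noteq> {0}"
  proof
    assume "\<phi> ` U = {0}"
    then have "U \<subseteq> T" using \<phi>_eq_0_iff \<open>U \<subseteq> V\<close> by blast
    then show False using \<open>T \<subseteq> U\<close> \<open>T \<noteq> U\<close> by blast
  qed
  show "\<phi> ` U \<noteq> \<phi> ` V" using preimage_image[OF U \<open>T \<subseteq> U\<close> \<open>U \<subseteq> V\<close>] \<open>U \<noteq> V\<close> by auto
  fix L assume "gsubmodule G act (\<phi> ` V) L \<and> L \<subseteq> \<phi> ` U"
  then have L: "gsubmodule G act (\<phi> ` V) L" and "L \<subseteq> \<phi> ` U" by auto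
  have "preimage L \<subseteq> U" using \<open>L \<subseteq> \<phi> ` U\<close> preimage_image[OF U \<open>T \<subseteq> U\<close> \<open>U \<subseteq> V\<close>] by blast
  then have "preimage L = T \<or> preimage L = U"
    using simple_subquotD[OF TU submod_preimage[OF L] subset_preimage[OF L]] by blast
  then show "L = {0} \<or> L = \<phi> ` U"
  proof
    assume "preimage L = T"
    moreover have "\<phi> ` T = {0}"
    proof
      show "\<phi> ` T \<subseteq> {0}" using \<phi>_eq_0_iff T_V by auto
      show "{0} \<subseteq> \<phi> ` T" using \<phi>_zero submod_zero[OF T] by (metis empty_subsetI image_eqI insert_subset)
    qed
    ultimately show ?thesis using image_preimage[OF L] by simp
  qed (use image_preimage[OF L] in simp)
next
  fix L assume "gsubmodule G act (\<phi> ` V) L \<and> \<phi> ` U \<subseteq> L"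
  then have L: "gsubmodule G act (\<phi> ` V) L" and "\<phi> ` U \<subseteq> L" by auto
  have "U \<subseteq> V" using UV unfolding simple_subquot_def by blast
  then have "U \<subseteq> preimage L" using \<open>\<phi> ` U \<subseteq> L\<close> by blast
  then have "preimage L = U \<or> preimage L = V"
    using simple_subquotD[OF UV submod_preimage[OF L]] by blast
  then show "L = \<phi> ` U \<or> L = \<phi> ` V" using image_preimage[OF L] by auto
next
  fix g x assume "g \<in> n0" "x \<in> \<phi> ` U"
  moreover have "U \<subseteq> V" "T \<subseteq> U" using TU UV unfolding simple_subquot_def by auto
  ultimately show "act g x = 0" using n0 act_\<phi> \<phi>_eq_0_iff \<open>n0 \<subseteq> G\<close> by (auto simp: subset_iff)
next
  fix g x assume "g \<in> q" "x \<in> \<phi> ` V"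
  then show "act g x \<in> \<phi> ` U" using q act_\<phi> \<open>q \<subseteq> G\<close> by auto
qed

lemma complement_preimage:
  assumes "T \<subseteq> U" "U \<subseteq> V" and C: "gsubmodule G act (\<phi> ` V) C" "\<phi> ` U \<inter> C = {0}"
    "\<forall>x\<in>\<phi> ` V. \<exists>u\<in>\<phi> ` U. \<exists>c\<in>C. x = u + c"
  shows "submod (preimage C)" "T \<subseteq> preimage C" "preimage C \<subseteq> V" "preimage C \<inter> U = T"
    "V \<subseteq> U + preimage C"
proof -
  show "submod (preimage C)" "T \<subseteq> preimage C" "preimage C \<subseteq> V"
    using submod_preimage[OF C(1)] subset_preimage[OF C(1)] by auto
  show "preimage C \<inter> U = T"
    using C(2) \<phi>_eq_0_iff subset_preimage[OF C(1)] assms(1,2) by (auto simp: subset_iff)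
  show "V \<subseteq> U + preimage C"
  proof
    fix v assume v: "v \<in> V"
    then obtain u c where uc: "u \<in> U" "c \<in> C" "\<phi> v = \<phi> u + c" using C(3) by blast
    then have "\<phi> (v - u) = c" using \<phi>_diff v assms(2) by auto
    moreover have "v - u \<in> V" using submod_diff[OF V v] uc(1) assms(2) by blast
    ultimately have "v - u \<in> preimage C" using uc(2) by blast
    from set_plus_intro[OF uc(1) this] show "v \<in> U + preimage C" by simp
  qed
qed

end

context k_subalgebra
begin

lemma ext1_vanishes_split:
  assumes ev: "ext1_vanishes smult G q n0" and "q \<subseteq> G" "n0 \<subseteq> G"
    and TU: "simple_subquot T U" and UV: "simple_subquot U V"
    and n0: "\<forall>g\<in>n0. \<forall>u\<in>U. g * u \<in> T" and q: "\<forall>g\<in>q. \<forall>v\<in>V. g * v \<in> U"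
    and fd: "fin_dim_mod V T"
  obtains C where "submod C" "T \<subseteq> C" "C \<subseteq> V" "C \<inter> U = T" "V \<subseteq> U + C"
proof -
  have T: "submod T" and "T \<subseteq> U" using TU unfolding simple_subquot_def by auto
  have V: "submod V" and "U \<subseteq> V" using UV unfolding simple_subquot_def by auto
  obtain \<phi> :: "'a \<Rightarrow> nat \<Rightarrow> 'k"
    where "\<And>v w. v \<in> V \<Longrightarrow> w \<in> V \<Longrightarrow> \<phi> (v + w) = \<phi> v + \<phi> w"
      and "\<And>v w. v \<in> V \<Longrightarrow> w \<in> V \<Longrightarrow> \<phi> v = \<phi> w \<longleftrightarrow> v - w \<in> T"
    using quotient_coordinates[OF submod_subspace[OF T] submod_subspace[OF V] fd] by blast
  then interpret quotient_coords smult G T V \<phi>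
    using T V \<open>T \<subseteq> U\<close> \<open>U \<subseteq> V\<close> by unfold_locales auto
  obtain C where "gsubmodule G act (\<phi> ` V) C" "\<phi> ` U \<inter> C = {0}"
    "\<forall>x\<in>\<phi> ` V. \<exists>u\<in>\<phi> ` U. \<exists>c\<in>C. x = u + c"
    using ev[unfolded ext1_vanishes_def, rule_format,
        OF extension_hypotheses[OF TU UV \<open>n0 \<subseteq> G\<close> \<open>q \<subseteq> G\<close> n0 q]] by blast
  from complement_preimage[OF \<open>T \<subseteq> U\<close> \<open>U \<subseteq> V\<close> this] show ?thesis by (rule that)
qed

subsection \<open>Decomposition of finite-dimensional subquotients into blocks\<close>

lemma obtain_simple_subquot:
  assumes U: "submod U" and R: "submod R" and "U \<subseteq> R" "\<not> R \<subseteq> U" and fd: "fin_dim_mod R U"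
  obtains V where "simple_subquot U V" "V \<subseteq> R"
proof -
  \<comment> \<open>a proper \<open>V \<supseteq> U\<close> with \<open>R / V\<close> of maximal dimension is minimal\<close>
  let ?P = "\<lambda>V. submod V \<and> U \<subseteq> V \<and> V \<subseteq> R \<and> V \<noteq> U"
  have "?P R" using R assms(3,4) by blast
  moreover have "\<forall>V. ?P V \<longrightarrow> dim_mod R V < Suc (dim_mod R U)"
    using dim_mod_mono[OF _ fd] by (simp add: le_imp_less_Suc)
  ultimately obtain V where V: "?P V" and V_max: "\<And>W. ?P W \<Longrightarrow> dim_mod R W \<le> dim_mod R V"
    using ex_has_greatest_nat[of ?P R "\<lambda>V. dim_mod R V"] by metis
  have "W = U \<or> W = V" if W: "submod W" "U \<subseteq> W" "W \<subseteq> V" for W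
  proof (rule ccontr)
    assume "\<not> (W = U \<or> W = V)"
    then have "?P W" "\<not> V \<subseteq> W" using W V by auto
    moreover have "fin_dim_mod R W" using fin_dim_mod_mono[OF W(2) fd] .
    ultimately have "dim_mod R V < dim_mod R W"
      using dim_mod_less[OF submod_subspace] V W by blast
    then show False using V_max[OF \<open>?P W\<close>] by simp
  qed
  then have "simple_subquot U V" using U V unfolding simple_subquot_def by blast
  then show ?thesis using V that by blast
qed

lemma simple_subquot_complement:
  assumes TU: "simple_subquot T U" and V: "submod V" "U \<subseteq> V"
    and C: "submod C" "T \<subseteq> C" "C \<subseteq> V" "C \<inter> U = T" "V \<subseteq> U + C"
  shows "simple_subquot C V"
  unfolding simple_subquot_def
proof (intro conjI allI impI)
  have U: "submod U" and "T \<subseteq> U" "T \<noteq> U" using TU unfolding simple_subquot_def by auto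
  show "submod C" "submod V" "C \<subseteq> V" by fact+
  show "C \<noteq> V" using C(4) V(2) \<open>T \<noteq> U\<close> by blast
  fix W assume W: "submod W \<and> C \<subseteq> W \<and> W \<subseteq> V"
  have "W \<inter> U = T \<or> W \<inter> U = U"
    using simple_subquotD[OF TU submod_Int[OF _ U]] W C(2) \<open>T \<subseteq> U\<close> by blast
  then show "W = C \<or> W = V"
  proof
    assume WU: "W \<inter> U = T"
    have "W \<subseteq> C"
    proof
      fix w assume w: "w \<in> W"
      then obtain u c where uc: "w = u + c" "u \<in> U" "c \<in> C" using C(5) W by (blast elim: set_plus_elim)
      then have "u \<in> W" using submod_diff[of W w c] W w by fastforce
      then have "u \<in> C" using WU uc(2) C(2) by blast
      then show "w \<in> C" using uc submod_add[OF C(1)] by blast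
    qed
    then show ?thesis using W by blast
  next
    assume "W \<inter> U = U"
    then have "U + C \<subseteq> W" using W by (intro set_plus_subset[OF submod_subspace]) auto
    then show ?thesis using W C(5) by blast
  qed
qed

lemma submod_gpart:
  assumes n: "ideal n" and W: "submod W"
  shows "submod (gpart G W n)"
  unfolding left_submod_def
proof (intro conjI ballI)
  show "0 \<in> gpart G W n" using submod_zero[OF W] unfolding gpart_def by simp
next
  fix a b assume "a \<in> gpart G W n" "b \<in> gpart G W n"
  then obtain i j where "\<forall>g\<in>ipow n i. g * a \<in> W" "\<forall>g\<in>ipow n j. g * b \<in> W"
    unfolding gpart_def by blast
  then have "\<forall>g\<in>ipow n (max i j). g * (a + b) \<in> W"
    using ipow_antimono[OF n] submod_add[OF W] by (auto simp: distrib_left) (meson max.cobounded1 max.cobounded2 subsetD)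
  then show "a + b \<in> gpart G W n" unfolding gpart_def by blast
next
  fix h a assume h: "h \<in> G" and "a \<in> gpart G W n"
  then obtain j where "\<forall>g\<in>ipow n j. g * a \<in> W" unfolding gpart_def by blast
  then have "\<forall>g\<in>ipow n j. g * (h * a) \<in> W"
    using ideal_mult_right[OF ideal_ipow[OF n] h] by (simp add: mult.assoc[symmetric])
  then show "h * a \<in> gpart G W n" unfolding gpart_def by blast
qed

lemma subset_gpart: "submod W \<Longrightarrow> W \<subseteq> gpart G W n"
  unfolding gpart_def by (auto intro!: exI[of _ 0] submod_mult)

lemma gpart_descend:
  assumes W: "submod W" and x: "x \<in> gpart G U n" and nU: "\<forall>g\<in>n. \<forall>u\<in>U. g * u \<in> W"
  shows "x \<in> gpart G W n"
proof -
  obtain j where j: "\<forall>g\<in>ipow n j. g * x \<in> U" using x unfolding gpart_def by blast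
  have "g * x \<in> W" if "g \<in> ipow n (Suc j)" for g
  proof -
    have "g \<in> setmul n (ipow n j)" using that by simp
    moreover have "a * (b * x) \<in> W" if "a \<in> n" "b \<in> ipow n j" for a b using that j nU by blast
    ultimately show ?thesis using setmul_apply[OF submod_zero[OF W] submod_add[OF W]] by blast
  qed
  then show ?thesis unfolding gpart_def by blast
qed

lemma gpart_killed_by_other:
  assumes n: "maximal_ideal G n" and n0: "maximal_ideal G n0" and "n \<noteq> n0"
    and X: "submod X" and Y: "Y \<subseteq> gpart G X n" and n0Y: "\<forall>g\<in>n0. \<forall>y\<in>Y. g * y \<in> X"
  shows "Y \<subseteq> X"
proof
  fix v assume "v \<in> Y"
  then obtain j where j: "\<forall>g\<in>ipow n j. g * v \<in> X" using Y unfolding gpart_def by blast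
  obtain e where e: "e \<in> ipow n j" "1 - e \<in> ipow n0 (Suc 0)" using ipow_comaximal[OF n n0 \<open>n \<noteq> n0\<close>] .
  have "(1 - e) * v \<in> X" using n0Y \<open>v \<in> Y\<close> e(2) ipow_one[OF maximal_ideal_ideal[OF n0]] by simp
  then have "e * v + (1 - e) * v \<in> X" using submod_add[OF X] j e(1) by blast
  then show "v \<in> X" by (simp add: algebra_simps)
qed

lemma push_past_other_factor:
  assumes qc: "quasicommutative smult G" and n0: "n0 \<in> cfs smult G"
    and TU: "simple_subquot T U" and n0U: "\<forall>g\<in>n0. \<forall>u\<in>U. g * u \<in> T"
    and UV: "simple_subquot U V" and "annihilator U V \<noteq> n0" and fd: "fin_dim_mod V T"
  obtains C where "simple_subquot C V" "\<forall>g\<in>n0. \<forall>v\<in>V. g * v \<in> C" "T \<subseteq> C" "C \<inter> U = T"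
    "V \<subseteq> U + C"
proof -
  have "T \<subseteq> U" using TU unfolding simple_subquot_def by blast
  have V: "submod V" and "U \<subseteq> V" using UV unfolding simple_subquot_def by auto
  have n0G: "n0 \<subseteq> G" using ideal_subset[OF cfs_ideal[OF n0]] .
  have "annihilator U V \<in> cfs smult G"
    using annihilator_in_cfs[OF UV fin_dim_mod_mono[OF \<open>T \<subseteq> U\<close> fd]] .
  then have ev: "ext1_vanishes smult G (annihilator U V) n0"
    using qc n0 \<open>annihilator U V \<noteq> n0\<close> unfolding quasicommutative_def by blast
  have "annihilator U V \<subseteq> G" "\<forall>g\<in>annihilator U V. \<forall>v\<in>V. g * v \<in> U"
    unfolding annihilator_def by auto
  then obtain C where C: "submod C" "T \<subseteq> C" "C \<subseteq> V" "C \<inter> U = T" "V \<subseteq> U + C"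
    using ext1_vanishes_split[OF ev _ n0G TU UV n0U _ fd] by blast
  have n0V: "\<forall>g\<in>n0. \<forall>v\<in>V. g * v \<in> C"
  proof (intro ballI)
    fix g v assume g: "g \<in> n0" and "v \<in> V"
    then obtain u c where "v = u + c" "u \<in> U" "c \<in> C" using C(5) by (blast elim: set_plus_elim)
    moreover have "g * u \<in> C" using n0U g \<open>u \<in> U\<close> C(2) by blast
    moreover have "g * c \<in> C" using submod_mult[OF C(1) _ \<open>c \<in> C\<close>] g n0G by blast
    ultimately show "g * v \<in> C" using submod_add[OF C(1)] by (simp add: distrib_left)
  qed
  from that[OF simple_subquot_complement[OF TU V \<open>U \<subseteq> V\<close> C] n0V C(2,4,5)] show ?thesis .
qed

text \<open>If \<open>S\<^sub>n\<^sub>0\<close> does not occur in \<open>R / U\<close>, the simple \<open>U / T\<close> of type \<open>n\<^sub>0\<close> is a direct summand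
  of \<open>R / T\<close>: by induction on \<open>dim (R / U)\<close>, each simple \<open>V / U\<close> is split off by the vanishing
  of \<open>Ext\<^sup>1\<close>, which replaces \<open>U / T\<close> by the isomorphic \<open>V / C\<close>.\<close>

lemma split_off_simple_bottom:
  assumes qc: "quasicommutative smult G" and n0: "n0 \<in> cfs smult G" and R: "submod R"
    and "simple_subquot T U" "\<forall>g\<in>n0. \<forall>u\<in>U. g * u \<in> T" "U \<subseteq> R" "fin_dim_mod R T"
    and "\<And>X Y. simple_subquot X Y \<Longrightarrow> U \<subseteq> X \<Longrightarrow> Y \<subseteq> R \<Longrightarrow> \<not> (\<forall>g\<in>n0. \<forall>y\<in>Y. g * y \<in> X)"
  shows "\<exists>C. submod C \<and> T \<subseteq> C \<and> C \<subseteq> R \<and> C \<inter> U = T \<and> R \<subseteq> U + C"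
  using assms(4-)
proof (induction "dim_mod R U" arbitrary: T U rule: less_induct)
  case less
  note TU = less.prems(1) and n0U = less.prems(2) and UR = less.prems(3) and fd = less.prems(4)
    and other = less.prems(5)
  have T: "submod T" and U: "submod U" and "T \<subseteq> U" using TU unfolding simple_subquot_def by auto
  have fdU: "fin_dim_mod R U" using fin_dim_mod_mono[OF \<open>T \<subseteq> U\<close> fd] .
  show ?case
  proof (cases "R \<subseteq> U")
    case True
    then have "R \<subseteq> U + T" using subset_set_plus_left[OF submod_zero[OF T]] by blast
    then show ?thesis using T \<open>T \<subseteq> U\<close> UR by blast
  next
    case False
    obtain V where UV: "simple_subquot U V" and "V \<subseteq> R"
      using obtain_simple_subquot[OF U R UR False fdU] .
    have V: "submod V" and "U \<subseteq> V" "U \<noteq> V" using UV unfolding simple_subquot_def by auto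
    have "annihilator U V \<noteq> n0" using other[OF UV subset_refl \<open>V \<subseteq> R\<close>] unfolding annihilator_def by blast
    moreover have "fin_dim_mod V T"
      using fin_dim_mod_subset[OF submod_subspace[OF V] fd] \<open>T \<subseteq> U\<close> \<open>U \<subseteq> V\<close> \<open>V \<subseteq> R\<close> by blast
    ultimately obtain C1 where C1V: "simple_subquot C1 V" and n0V: "\<forall>g\<in>n0. \<forall>v\<in>V. g * v \<in> C1"
      and C1: "T \<subseteq> C1" "C1 \<inter> U = T" "V \<subseteq> U + C1"
      using push_past_other_factor[OF qc n0 TU n0U UV] by blast
    have "dim_mod R V < dim_mod R U"
      using dim_mod_less[OF submod_subspace[OF V] fdU \<open>U \<subseteq> V\<close> \<open>V \<subseteq> R\<close>] \<open>U \<subseteq> V\<close> \<open>U \<noteq> V\<close> by blast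
    moreover have "fin_dim_mod R C1" using fin_dim_mod_mono[OF C1(1) fd] .
    moreover have "\<not> (\<forall>g\<in>n0. \<forall>y\<in>Y. g * y \<in> X)" if "simple_subquot X Y" "V \<subseteq> X" "Y \<subseteq> R" for X Y
      using other that \<open>U \<subseteq> V\<close> by blast
    ultimately obtain C where C: "submod C" "C1 \<subseteq> C" "C \<subseteq> R" "C \<inter> V = C1" "R \<subseteq> V + C"
      using less.hyps[OF _ C1V n0V \<open>V \<subseteq> R\<close>] by blast
    have "C1 + C \<subseteq> C" by (rule set_plus_subset[OF submod_subspace[OF C(1)] C(2) subset_refl])
    have "V + C \<subseteq> (U + C1) + C" using C1(3) by (rule set_plus_mono2) simp
    also have "\<dots> = U + (C1 + C)" by (rule add.assoc)
    also have "\<dots> \<subseteq> U + C" using \<open>C1 + C \<subseteq> C\<close> by (rule set_plus_mono2[OF subset_refl])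
    finally have "V + C \<subseteq> U + C" .
    moreover have "C \<inter> U = T" using C(2,4) C1(1,2) \<open>U \<subseteq> V\<close> by blast
    ultimately show ?thesis using C C1(1) by blast
  qed
qed

lemma gpart_mono: "U \<subseteq> X \<Longrightarrow> gpart G U n \<subseteq> gpart G X n"
  unfolding gpart_def by blast

lemma lift_gpart_component:
  assumes qc: "quasicommutative smult G" and n0: "n0 \<in> cfs smult G" and n: "n \<in> cfs smult G" "n \<noteq> n0"
    and N: "submod N" and TU: "simple_subquot T U" and n0U: "\<forall>g\<in>n0. \<forall>u\<in>U. g * u \<in> T"
    and "U \<subseteq> N" "fin_dim_mod N T" and y: "y \<in> N" "y \<in> gpart G U n"
  obtains c where "c \<in> N" "c \<in> gpart G T n" "y - c \<in> U"
proof -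
  have T: "submod T" and U: "submod U" and "T \<subseteq> U" using TU unfolding simple_subquot_def by auto
  have n_max: "maximal_ideal G n" and n0_max: "maximal_ideal G n0" using n n0 cfs_maximal_ideal by auto
  let ?R = "N \<inter> gpart G U n"
  have R: "submod ?R" using submod_Int[OF N submod_gpart[OF maximal_ideal_ideal[OF n_max] U]] .
  have "U \<subseteq> ?R" using \<open>U \<subseteq> N\<close> subset_gpart[OF U] by blast
  have "\<not> (\<forall>g\<in>n0. \<forall>y\<in>Y. g * y \<in> X)" if XY: "simple_subquot X Y" "U \<subseteq> X" "Y \<subseteq> ?R" for X Y
  proof
    assume killed: "\<forall>g\<in>n0. \<forall>y\<in>Y. g * y \<in> X"
    have X: "submod X" using XY(1) unfolding simple_subquot_def by blast
    have "Y \<subseteq> gpart G X n" using XY(3) gpart_mono[OF XY(2)] by blast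
    then have "Y \<subseteq> X" by (rule gpart_killed_by_other[OF n_max n0_max n(2) X _ killed])
    then show False using XY(1) unfolding simple_subquot_def by blast
  qed
  moreover have "fin_dim_mod ?R T"
    using fin_dim_mod_subset[OF submod_subspace[OF R] \<open>fin_dim_mod N T\<close>] \<open>T \<subseteq> U\<close> \<open>U \<subseteq> ?R\<close> by blast
  ultimately obtain C where C: "submod C" "T \<subseteq> C" "C \<subseteq> ?R" "C \<inter> U = T" "?R \<subseteq> U + C"
    using split_off_simple_bottom[OF qc n0 R TU n0U \<open>U \<subseteq> ?R\<close>] by blast
  obtain u c where uc: "y = u + c" "u \<in> U" "c \<in> C" using C(5) y by (blast elim: set_plus_elim)
  obtain j where j: "\<forall>g\<in>ipow n j. g * y \<in> U" using y(2) unfolding gpart_def by blast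
  have "g * c \<in> T" if g: "g \<in> ipow n j" for g
  proof -
    have gG: "g \<in> G" using g ideal_subset[OF ideal_ipow[OF maximal_ideal_ideal[OF n_max]]] by blast
    have "g * c = g * y - g * u" using uc(1) by (simp add: algebra_simps)
    then have "g * c \<in> U" using submod_diff[OF U] j g submod_mult[OF U gG uc(2)] by simp
    moreover have "g * c \<in> C" using submod_mult[OF C(1) gG uc(3)] .
    ultimately show ?thesis using C(4) by blast
  qed
  then have "c \<in> gpart G T n" unfolding gpart_def by blast
  moreover have "c \<in> N" using uc(3) C(3) by blast
  moreover have "y - c \<in> U" using uc by simp
  ultimately show ?thesis using that by blast
qed

lemma residual_in_gpart:
  assumes N': "submod N'" and U: "submod U" and n0: "ideal n0" and n0U: "\<forall>g\<in>n0. \<forall>u\<in>U. g * u \<in> N'"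
    and "finite F" "x - sum y F \<in> U" "\<forall>n\<in>F. y n \<in> gpart G U n" "\<forall>n\<in>F - {n0}. y n - c n \<in> U"
  shows "x - (\<Sum>n\<in>F - {n0}. c n) \<in> gpart G N' n0"
proof -
  have GP: "submod (gpart G U n0)" using submod_gpart[OF n0 U] .
  have "sum y F = (if n0 \<in> F then y n0 else 0) + sum y (F - {n0})"
    using \<open>finite F\<close> by (cases "n0 \<in> F") (simp_all add: sum.remove)
  then have eq: "x - (\<Sum>n\<in>F - {n0}. c n)
      = (x - sum y F) + (if n0 \<in> F then y n0 else 0) + (\<Sum>n\<in>F - {n0}. y n - c n)"
    by (simp add: sum_subtractf algebra_simps)
  have "x - sum y F \<in> gpart G U n0" using assms(6) subset_gpart[OF U] by blast
  moreover have "(if n0 \<in> F then y n0 else 0) \<in> gpart G U n0" using assms(7) submod_zero[OF GP] by auto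
  moreover have "(\<Sum>n\<in>F - {n0}. y n - c n) \<in> gpart G U n0"
    using assms(8) subset_gpart[OF U] by (intro submod_sum[OF GP]) blast
  ultimately have "x - (\<Sum>n\<in>F - {n0}. c n) \<in> gpart G U n0" unfolding eq by (intro submod_add[OF GP])
  then show ?thesis using gpart_descend[OF N' _ n0U] by blast
qed

lemma block_decomposition:
  assumes qc: "quasicommutative smult G" and N: "submod N"
    and "submod N'" "N' \<subseteq> N" "fin_dim_mod N N'" "x \<in> N"
  shows "\<exists>F y. finite F \<and> F \<subseteq> cfs smult G \<and> (\<forall>n\<in>F. y n \<in> N \<and> y n \<in> gpart G N' n) \<and>
    x - sum y F \<in> N'"
  using assms(3-)
proof (induction "dim_mod N N'" arbitrary: N' x rule: less_induct)
  case less
  note N' = less.prems(1) and fd = less.prems(3) and x = less.prems(4)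
  show ?case
  proof (cases "N \<subseteq> N'")
    case True
    then show ?thesis using x by (intro exI[of _ "{}"]) auto
  next
    case False
    obtain U where TU: "simple_subquot N' U" and "U \<subseteq> N"
      using obtain_simple_subquot[OF N' N less.prems(2) False fd] .
    have U: "submod U" and "N' \<subseteq> U" "N' \<noteq> U" using TU unfolding simple_subquot_def by auto
    define n0 where "n0 = annihilator N' U"
    have n0: "n0 \<in> cfs smult G" unfolding n0_def
      using annihilator_in_cfs[OF TU fin_dim_mod_subset[OF submod_subspace[OF U] fd \<open>N' \<subseteq> U\<close> \<open>U \<subseteq> N\<close>]] .
    have n0U: "\<forall>g\<in>n0. \<forall>u\<in>U. g * u \<in> N'" unfolding n0_def annihilator_def by blast
    have "dim_mod N U < dim_mod N N'"
      using dim_mod_less[OF submod_subspace[OF U] fd \<open>N' \<subseteq> U\<close> \<open>U \<subseteq> N\<close>] \<open>N' \<subseteq> U\<close> \<open>N' \<noteq> U\<close> by blast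
    then obtain F y where F: "finite F" "F \<subseteq> cfs smult G" "\<forall>n\<in>F. y n \<in> N \<and> y n \<in> gpart G U n"
      "x - sum y F \<in> U"
      using less.hyps[OF _ U \<open>U \<subseteq> N\<close> fin_dim_mod_mono[OF \<open>N' \<subseteq> U\<close> fd] x] by blast
    have "\<exists>c. c \<in> N \<and> c \<in> gpart G N' n \<and> y n - c \<in> U" if n: "n \<in> F - {n0}" for n
    proof -
      have "n \<in> cfs smult G" "n \<noteq> n0" "y n \<in> N" "y n \<in> gpart G U n" using n F(2,3) by auto
      from lift_gpart_component[OF qc n0 this(1,2) N TU n0U \<open>U \<subseteq> N\<close> fd this(3,4)]
      show ?thesis by blast
    qed
    then obtain c where c: "\<And>n. n \<in> F - {n0} \<Longrightarrow> c n \<in> N \<and> c n \<in> gpart G N' n \<and> y n - c n \<in> U"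
      by metis
    define y' where "y' n = (if n = n0 then x - (\<Sum>n'\<in>F - {n0}. c n') else c n)" for n
    have "y' n0 \<in> gpart G N' n0"
      unfolding y'_def using residual_in_gpart[OF N' U cfs_ideal[OF n0] n0U F(1,4)] F(3) c by auto
    moreover have "y' n0 \<in> N"
    proof -
      have "(\<Sum>n\<in>F - {n0}. c n) \<in> N" using c by (intro submod_sum[OF N]) blast
      then show ?thesis unfolding y'_def using submod_diff[OF N x] by simp
    qed
    ultimately have "\<forall>n\<in>insert n0 F. y' n \<in> N \<and> y' n \<in> gpart G N' n"
      using c unfolding y'_def by auto
    moreover have "x - sum y' (insert n0 F) = 0"
      using sum.insert_remove[OF F(1), of y' n0] unfolding y'_def by simp
    ultimately show ?thesis
      using F(1,2) n0 submod_zero[OF N'] by (intro exI[of _ "insert n0 F"] exI[of _ y']) auto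
  qed
qed

lemma gpart_sum_independent:
  assumes L: "submod L" and F: "finite F" "F \<subseteq> cfs smult G" and y: "\<forall>n\<in>F. y n \<in> gpart G L n"
    and "sum y F \<in> L" and "n0 \<in> F"
  shows "y n0 \<in> L"
proof -
  have "\<forall>n\<in>F. \<exists>j. \<forall>g\<in>ipow n j. g * y n \<in> L" using y unfolding gpart_def by blast
  then obtain j where j: "\<forall>n\<in>F. \<forall>g\<in>ipow n (j n). g * y n \<in> L" by (rule bchoice[elim_format]) blast
  have max: "maximal_ideal G n" if "n \<in> F" for n using that F(2) cfs_maximal_ideal by blast
  have "\<forall>n\<in>F - {n0}. maximal_ideal G n \<and> n \<noteq> n0" using max by blast
  then obtain e where e: "e \<in> G" "\<forall>n\<in>F - {n0}. e \<in> ipow n (j n)" "1 - e \<in> ipow n0 (j n0)"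
    by (rule chinese_remainder[OF finite_Diff[OF F(1)] max[OF \<open>n0 \<in> F\<close>]])
  have "(1 - e) * y n0 \<in> L" using j e(3) \<open>n0 \<in> F\<close> by blast
  moreover have "e * y n0 \<in> L"
  proof -
    have "e * y n0 = e * sum y F - (\<Sum>n\<in>F - {n0}. e * y n)"
      using sum.remove[OF F(1) \<open>n0 \<in> F\<close>, of y] by (simp add: sum_distrib_left distrib_left)
    moreover have "e * sum y F \<in> L" using submod_mult[OF L e(1) \<open>sum y F \<in> L\<close>] .
    moreover have "(\<Sum>n\<in>F - {n0}. e * y n) \<in> L" using j e(2) by (intro submod_sum[OF L]) blast
    ultimately show ?thesis using submod_diff[OF L] by simp
  qed
  ultimately have "e * y n0 + (1 - e) * y n0 \<in> L" using submod_add[OF L] by blast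
  then show ?thesis by (simp add: algebra_simps)
qed

lemma block_quot_Aideal:
  assumes noeth: "noetherian G" and qc: "quasicommutative smult G" and qcen: "quasicentral G"
    and m: "m \<in> cfs smult G"
  shows "block_quot smult G (Aideal G m k)"
  unfolding block_quot_def
proof (intro conjI allI impI)
  fix x
  let ?L = "Aideal G m k"
  let ?N = "dbl G x G + ?L"
  have "x \<in> dbl G x G" using mem_dbl[OF G_one G_one] by simp
  then have "x \<in> ?N" using subset_set_plus_left[OF submod_zero[OF submod_Aideal]] by blast
  have "\<exists>F y. finite F \<and> F \<subseteq> cfs smult G \<and> (\<forall>n\<in>F. y n \<in> ?N \<and> y n \<in> gpart G ?L n) \<and>
      x - sum y F \<in> ?L"
    by (rule block_decomposition[OF qc submod_set_plus[OF submod_dbl submod_Aideal] submod_Aideal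
        set_zero_plus2[OF submod_zero[OF submod_dbl]]
        fin_dim_mod_double_coset[OF noeth qcen cfs_ideal[OF m] cfs_fin_dim_mod[OF m]] \<open>x \<in> ?N\<close>])
  then show "\<exists>F y. finite F \<and> F \<subseteq> cfs smult G \<and> (\<forall>n\<in>F. y n \<in> gpart G ?L n) \<and> x - sum y F \<in> ?L"
    by blast
next
  fix F y
  assume "finite F \<and> F \<subseteq> cfs smult G \<and> (\<forall>n\<in>F. y n \<in> gpart G (Aideal G m k) n) \<and>
    sum y F \<in> Aideal G m k"
  then show "\<forall>n\<in>F. y n \<in> Aideal G m k" using gpart_sum_independent[OF submod_Aideal] by blast
qed

subsection \<open>Composition factors in sums and products\<close>

lemma simple_subquot_plus:
  assumes XY: "simple_subquot X Y" and Z: "submod Z" and "Y \<inter> Z \<subseteq> X"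
  shows "simple_subquot (X + Z) (Y + Z)"
  unfolding simple_subquot_def
proof (intro conjI allI impI)
  have X: "submod X" and Y: "submod Y" and "X \<subseteq> Y" "X \<noteq> Y" using XY unfolding simple_subquot_def by auto
  show "submod (X + Z)" "submod (Y + Z)" using submod_set_plus X Y Z by auto
  show XZ_YZ: "X + Z \<subseteq> Y + Z" using \<open>X \<subseteq> Y\<close> by (rule set_plus_mono2) simp
  show "X + Z \<noteq> Y + Z"
  proof
    assume eq: "X + Z = Y + Z"
    obtain y where y: "y \<in> Y" "y \<notin> X" using \<open>X \<subseteq> Y\<close> \<open>X \<noteq> Y\<close> by blast
    have "y \<in> X + Z" using eq set_plus_intro[OF y(1) submod_zero[OF Z]] by simp
    then obtain x z where xz: "y = x + z" "x \<in> X" "z \<in> Z" by (rule set_plus_elim)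
    then have "z \<in> Y" using submod_diff[OF Y y(1), of x] \<open>X \<subseteq> Y\<close> by auto
    then have "z \<in> X" using \<open>Y \<inter> Z \<subseteq> X\<close> xz(3) by blast
    then show False using xz y(2) submod_add[OF X] by blast
  qed
  fix W assume W: "submod W \<and> X + Z \<subseteq> W \<and> W \<subseteq> Y + Z"
  have "X \<subseteq> W" "Z \<subseteq> W"
    using W subset_set_plus_left[OF submod_zero[OF Z], of X] set_zero_plus2[OF submod_zero[OF X], of Z] by auto
  then have "W \<inter> Y = X \<or> W \<inter> Y = Y"
    using simple_subquotD[OF XY submod_Int[OF _ Y]] W \<open>X \<subseteq> Y\<close> by blast
  then show "W = X + Z \<or> W = Y + Z"
  proof
    assume WY: "W \<inter> Y = X"
    have "W \<subseteq> X + Z"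
    proof
      fix w assume w: "w \<in> W"
      then obtain y z where yz: "w = y + z" "y \<in> Y" "z \<in> Z" using W by (blast elim: set_plus_elim)
      then have "y \<in> W" using submod_diff[of W w z] W w \<open>Z \<subseteq> W\<close> by fastforce
      then show "w \<in> X + Z" using WY yz by blast
    qed
    then show ?thesis using W by blast
  next
    assume "W \<inter> Y = Y"
    then have "Y + Z \<subseteq> W" using W \<open>Z \<subseteq> W\<close> by (intro set_plus_subset[OF submod_subspace]) auto
    then show ?thesis using W by blast
  qed
qed

lemma simple_subquot_Int:
  assumes XY: "simple_subquot X Y" and Z: "submod Z" and "Y \<subseteq> X + (Y \<inter> Z)"
  shows "simple_subquot (X \<inter> Z) (Y \<inter> Z)"
  unfolding simple_subquot_def
proof (intro conjI allI impI)
  have X: "submod X" and Y: "submod Y" and "X \<subseteq> Y" "X \<noteq> Y" using XY unfolding simple_subquot_def by auto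
  show "submod (X \<inter> Z)" "submod (Y \<inter> Z)" using submod_Int X Y Z by auto
  show "X \<inter> Z \<subseteq> Y \<inter> Z" using \<open>X \<subseteq> Y\<close> by blast
  show "X \<inter> Z \<noteq> Y \<inter> Z"
  proof
    assume "X \<inter> Z = Y \<inter> Z"
    then have "X + (Y \<inter> Z) \<subseteq> X" using X by (intro set_plus_subset[OF submod_subspace]) auto
    then show False using \<open>Y \<subseteq> X + (Y \<inter> Z)\<close> \<open>X \<subseteq> Y\<close> \<open>X \<noteq> Y\<close> by blast
  qed
  fix W assume W: "submod W \<and> X \<inter> Z \<subseteq> W \<and> W \<subseteq> Y \<inter> Z"
  have "X \<subseteq> X + W" using W subset_set_plus_left[OF submod_zero] by blast
  moreover have "X + W \<subseteq> Y" using W \<open>X \<subseteq> Y\<close> by (intro set_plus_subset[OF submod_subspace[OF Y]]) auto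
  ultimately have "X + W = X \<or> X + W = Y"
    using simple_subquotD[OF XY submod_set_plus[OF X]] W by blast
  then show "W = X \<inter> Z \<or> W = Y \<inter> Z"
  proof
    assume "X + W = X"
    then have "W \<subseteq> X" using set_zero_plus2[OF submod_zero[OF X], of W] by simp
    then show ?thesis using W by blast
  next
    assume XW: "X + W = Y"
    have "Y \<inter> Z \<subseteq> W"
    proof
      fix v assume v: "v \<in> Y \<inter> Z"
      then obtain x w where xw: "v = x + w" "x \<in> X" "w \<in> W" using XW by (blast elim: set_plus_elim)
      then have "x \<in> Z" using submod_diff[OF Z, of v w] v W by fastforce
      then have "x \<in> W" using xw(2) W by blast
      then show "v \<in> W" using xw submod_add[of W] W by blast
    qed
    then show ?thesis using W by blast
  qed
qed

definition factor_of_type :: "'a set \<Rightarrow> 'a set \<Rightarrow> 'a set \<Rightarrow> bool" where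
  "factor_of_type n X Y \<longleftrightarrow> simple_subquot X Y \<and> (\<forall>g\<in>n. \<forall>y\<in>Y. g * y \<in> X)"

lemma factor_of_type_plus:
  assumes XY: "factor_of_type n X Y" and "n \<subseteq> G" and Z: "submod Z" and "Y \<inter> Z \<subseteq> X"
  shows "factor_of_type n (X + Z) (Y + Z)"
  unfolding factor_of_type_def
proof
  show "simple_subquot (X + Z) (Y + Z)"
    using simple_subquot_plus[OF _ Z \<open>Y \<inter> Z \<subseteq> X\<close>] XY unfolding factor_of_type_def by blast
  show "\<forall>g\<in>n. \<forall>v\<in>Y + Z. g * v \<in> X + Z"
  proof (intro ballI)
    fix g v assume g: "g \<in> n" and "v \<in> Y + Z"
    then obtain y z where "v = y + z" "y \<in> Y" "z \<in> Z" by (auto elim: set_plus_elim)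
    then show "g * v \<in> X + Z"
      using set_plus_intro[of "g * y" X "g * z" Z] XY submod_mult[OF Z] g \<open>n \<subseteq> G\<close>
      unfolding factor_of_type_def by (auto simp: distrib_left)
  qed
qed

lemma factor_of_type_Int:
  assumes XY: "factor_of_type n X Y" and "n \<subseteq> G" and Z: "submod Z" and "Y \<subseteq> X + (Y \<inter> Z)"
  shows "factor_of_type n (X \<inter> Z) (Y \<inter> Z)"
  using simple_subquot_Int[OF _ Z \<open>Y \<subseteq> X + (Y \<inter> Z)\<close>] XY submod_mult[OF Z] \<open>n \<subseteq> G\<close>
  unfolding factor_of_type_def by blast

lemma factor_of_type_in_plus:
  assumes XY: "factor_of_type n X Y" and "n \<subseteq> G" and M1: "submod M1" and M2: "submod M2"
    and "B \<subseteq> X" "B \<subseteq> M1" "B \<subseteq> M2" and cover: "Y \<subseteq> M1 + M2"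
  shows "\<exists>X' Y'. factor_of_type n X' Y' \<and> B \<subseteq> X' \<and> (Y' \<subseteq> M1 \<or> Y' \<subseteq> M2)"
proof -
  have X: "submod X" and Y: "submod Y" and "X \<subseteq> Y" "X \<noteq> Y"
    using XY unfolding factor_of_type_def simple_subquot_def by auto
  show ?thesis
  proof (cases "Y \<subseteq> X + (Y \<inter> M1)")
    case True
    then show ?thesis using factor_of_type_Int[OF XY \<open>n \<subseteq> G\<close> M1] \<open>B \<subseteq> X\<close> \<open>B \<subseteq> M1\<close> by blast
  next
    case False
    have "X \<subseteq> X + (Y \<inter> M1)" by (rule subset_set_plus_left[OF submod_zero[OF submod_Int[OF Y M1]]])
    moreover have "X + (Y \<inter> M1) \<subseteq> Y" using \<open>X \<subseteq> Y\<close> by (intro set_plus_subset[OF submod_subspace[OF Y]]) auto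
    ultimately have "X + (Y \<inter> M1) = X"
      using simple_subquotD[OF _ submod_set_plus[OF X submod_Int[OF Y M1]]] XY False
      unfolding factor_of_type_def by blast
    then have "Y \<inter> M1 \<subseteq> X" using set_zero_plus2[OF submod_zero[OF X], of "Y \<inter> M1"] by simp
    then have XY1: "factor_of_type n (X + M1) (Y + M1)" by (rule factor_of_type_plus[OF XY \<open>n \<subseteq> G\<close> M1])
    have "Y + M1 \<subseteq> (X + M1) + ((Y + M1) \<inter> M2)"
    proof
      fix v assume "v \<in> Y + M1"
      then obtain y a where ya: "v = y + a" "y \<in> Y" "a \<in> M1" by (rule set_plus_elim)
      then obtain a' b where ab: "y = a' + b" "a' \<in> M1" "b \<in> M2" using cover by (blast elim: set_plus_elim)
      have "b = y + (- a')" using ab(1) by simp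
      then have "b \<in> Y + M1" using set_plus_intro[OF ya(2) submod_minus[OF M1 ab(2)]] by simp
      then have b: "b \<in> (Y + M1) \<inter> M2" using ab(3) by blast
      have "0 + (a' + a) \<in> X + M1"
        using set_plus_intro[OF submod_zero[OF X] submod_add[OF M1 ab(2) ya(3)]] .
      from set_plus_intro[OF this b]
      have "(0 + (a' + a)) + b \<in> (X + M1) + ((Y + M1) \<inter> M2)" .
      then show "v \<in> (X + M1) + ((Y + M1) \<inter> M2)" using ya(1) ab(1) by (simp add: ac_simps)
    qed
    then have "factor_of_type n ((X + M1) \<inter> M2) ((Y + M1) \<inter> M2)"
      by (rule factor_of_type_Int[OF XY1 \<open>n \<subseteq> G\<close> M2])
    moreover have "B \<subseteq> (X + M1) \<inter> M2"
      using \<open>B \<subseteq> X\<close> \<open>B \<subseteq> M2\<close> subset_set_plus_left[OF submod_zero[OF M1], of X] by blast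
    ultimately show ?thesis by blast
  qed
qed

lemma zero_mem_set_sum: "(\<And>i. i < r \<Longrightarrow> 0 \<in> M i) \<Longrightarrow> (0::'a) \<in> (\<Sum>i<(r::nat). M i)"
proof (induction r)
  case (Suc r)
  then have "0 + 0 \<in> (\<Sum>i<r. M i) + M r" by (intro set_plus_intro) auto
  then show ?case by simp
qed simp

lemma submod_plus_sum:
  "submod B \<Longrightarrow> (\<And>i. i < r \<Longrightarrow> submod (M i)) \<Longrightarrow> submod (B + (\<Sum>i<(r::nat). M i))"
  by (induction r) (simp_all add: add.assoc[symmetric] submod_set_plus)

lemma factor_of_type_in_sum:
  assumes "factor_of_type n X Y" "n \<subseteq> G" and B: "submod B" "B \<subseteq> X"
    and M: "\<And>i. i < r \<Longrightarrow> submod (M i)" "\<And>i. i < r \<Longrightarrow> B \<subseteq> M i"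
    and "Y \<subseteq> B + (\<Sum>i<(r::nat). M i)"
  shows "\<exists>i<r. \<exists>X' Y'. factor_of_type n X' Y' \<and> B \<subseteq> X' \<and> Y' \<subseteq> M i"
  using assms(1,4,7) M
proof (induction r arbitrary: X Y)
  case 0
  then show ?case unfolding factor_of_type_def simple_subquot_def by auto
next
  case (Suc r)
  let ?S = "B + (\<Sum>i<r. M i)"
  have S: "submod ?S" using submod_plus_sum[OF B(1)] Suc.prems(4) by simp
  have "0 \<in> (\<Sum>i<r. M i)" using zero_mem_set_sum submod_zero Suc.prems(4) by simp
  then have "B \<subseteq> ?S" by (rule subset_set_plus_left)
  moreover have "Y \<subseteq> ?S + M r" using Suc.prems(3) by (simp add: add.assoc)
  ultimately obtain X' Y' where XY': "factor_of_type n X' Y'" "B \<subseteq> X'" "Y' \<subseteq> ?S \<or> Y' \<subseteq> M r"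
    using factor_of_type_in_plus[OF Suc.prems(1) \<open>n \<subseteq> G\<close> S Suc.prems(4)[of r] Suc.prems(2) _ Suc.prems(5)[of r]]
    by blast
  then show ?case
    using Suc.IH[OF XY'(1,2)] Suc.prems(4,5) less_SucI by blast
qed

lemma image_preimage_mult_right:
  assumes Y: "submod Y" "B \<subseteq> Y" and cover: "Y \<subseteq> (\<lambda>z. z * \<mu>) ` D + B"
  shows "(\<lambda>z. z * \<mu>) ` {z \<in> D. z * \<mu> \<in> Y} + B = Y"
proof
  show "(\<lambda>z. z * \<mu>) ` {z \<in> D. z * \<mu> \<in> Y} + B \<subseteq> Y"
    using Y by (intro set_plus_subset[OF submod_subspace]) auto
  show "Y \<subseteq> (\<lambda>z. z * \<mu>) ` {z \<in> D. z * \<mu> \<in> Y} + B"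
  proof
    fix y assume y: "y \<in> Y"
    then obtain z b where zb: "y = z * \<mu> + b" "z \<in> D" "b \<in> B" using cover by (blast elim: set_plus_elim)
    then have "z * \<mu> \<in> Y" using submod_diff[OF Y(1) y, of b] Y(2) by auto
    then show "y \<in> (\<lambda>z. z * \<mu>) ` {z \<in> D. z * \<mu> \<in> Y} + B" using zb by blast
  qed
qed

lemma factor_of_type_pullback:
  assumes XY: "factor_of_type n Y1 Y2" and "n \<subseteq> G" and B: "submod B" "B \<subseteq> Y1" and D: "submod D"
    and cover: "Y2 \<subseteq> (\<lambda>z. z * \<mu>) ` D + B"
  shows "factor_of_type n {z \<in> D. z * \<mu> \<in> Y1} {z \<in> D. z * \<mu> \<in> Y2}"
proof -
  let ?P = "\<lambda>Y. {z \<in> D. z * \<mu> \<in> Y}" and ?img = "\<lambda>W. (\<lambda>z. z * \<mu>) ` W + B"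
  have Y1: "submod Y1" and Y2: "submod Y2" and "Y1 \<subseteq> Y2" "Y1 \<noteq> Y2"
    using XY unfolding factor_of_type_def simple_subquot_def by auto
  have img_P1: "?img (?P Y1) = Y1"
    by (rule image_preimage_mult_right[OF Y1 B(2) order_trans[OF \<open>Y1 \<subseteq> Y2\<close> cover]])
  have img_P2: "?img (?P Y2) = Y2"
    by (rule image_preimage_mult_right[OF Y2 order_trans[OF B(2) \<open>Y1 \<subseteq> Y2\<close>] cover])
  have "simple_subquot (?P Y1) (?P Y2)"
    unfolding simple_subquot_def
  proof (intro conjI allI impI)
    show "submod (?P Y1)" "submod (?P Y2)" using submod_preimage_mult_right D Y1 Y2 by auto
    show "?P Y1 \<subseteq> ?P Y2" using \<open>Y1 \<subseteq> Y2\<close> by blast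
    show "?P Y1 \<noteq> ?P Y2" using img_P1 img_P2 \<open>Y1 \<noteq> Y2\<close> by metis
    fix W assume W: "submod W \<and> ?P Y1 \<subseteq> W \<and> W \<subseteq> ?P Y2"
    have "?img W = Y1 \<or> ?img W = Y2"
    proof (rule simple_subquotD[OF _ submod_set_plus[OF submod_image_mult_right B(1)]])
      show "simple_subquot Y1 Y2" using XY unfolding factor_of_type_def by blast
      show "submod W" using W by blast
      show "Y1 \<subseteq> ?img W" using img_P1 W set_plus_mono2[OF image_mono subset_refl] by blast
      show "?img W \<subseteq> Y2" using img_P2 W set_plus_mono2[OF image_mono subset_refl] by blast
    qed
    then show "W = ?P Y1 \<or> W = ?P Y2"
    proof
      assume "?img W = Y1"
      then have "W \<subseteq> ?P Y1" using W set_plus_intro[OF _ submod_zero[OF B(1)]] by fastforce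
      then show ?thesis using W by blast
    next
      assume WY2: "?img W = Y2"
      have "?P Y2 \<subseteq> W"
      proof
        fix z assume z: "z \<in> ?P Y2"
        then obtain w b where wb: "z * \<mu> = w * \<mu> + b" "w \<in> W" "b \<in> B"
          unfolding WY2[symmetric] by (auto elim: set_plus_elim)
        have "(z - w) * \<mu> \<in> Y1" using wb B(2) by (auto simp: algebra_simps)
        moreover have "z - w \<in> D" using submod_diff[OF D] z wb(2) W by blast
        ultimately have "z - w \<in> W" using W by blast
        then show "z \<in> W" using submod_add[of W "z - w" w] W wb(2) by simp
      qed
      then show ?thesis using W by blast
    qed
  qed
  moreover have "\<forall>g\<in>n. \<forall>z\<in>?P Y2. g * z \<in> ?P Y1"
    using XY submod_mult[OF D] \<open>n \<subseteq> G\<close> unfolding factor_of_type_def by (auto simp: mult.assoc)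
  ultimately show ?thesis unfolding factor_of_type_def by blast
qed

subsection \<open>The support of \<open>A / A m\<^sup>k\<close>\<close>

lemma maximal_ideal_eq_if_ipow_subset:
  assumes n: "maximal_ideal G n" and P: "maximal_ideal G P" and "ipow n j \<subseteq> P"
  shows "P = n"
proof (rule ccontr)
  assume "P \<noteq> n"
  then obtain e where e: "e \<in> ipow n j" "1 - e \<in> ipow P (Suc 0)"
    using ipow_comaximal[OF n P] by metis
  have I: "ideal P" using maximal_ideal_ideal[OF P] .
  have "e \<in> P" "1 - e \<in> P" using e assms(3) ipow_one[OF I] by auto
  then have "e + (1 - e) \<in> P" by (rule ideal_add[OF I])
  then have "g \<in> P" if "g \<in> G" for g using ideal_mult_left[OF I that, of 1] by simp
  then have "P = G" using ideal_subset[OF I] by blast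
  then show False using P unfolding maximal_ideal_def by blast
qed

lemma simple_subquot_generated:
  assumes LU: "simple_subquot L U" and "u \<in> U" "u \<notin> L"
  shows "U = (\<lambda>g. g * u) ` G + L"
proof -
  have L: "submod L" and U: "submod U" and "L \<subseteq> U" using LU unfolding simple_subquot_def by auto
  have "(\<lambda>g. g * u) ` G + L = L \<or> (\<lambda>g. g * u) ` G + L = U"
  proof (rule simple_subquotD[OF LU submod_set_plus[OF submod_image_mult_right[OF submod_G] L]])
    show "L \<subseteq> (\<lambda>g. g * u) ` G + L" by (rule set_zero_plus2) (use G_zero in force)
    show "(\<lambda>g. g * u) ` G + L \<subseteq> U"
      using submod_mult[OF U _ \<open>u \<in> U\<close>] \<open>L \<subseteq> U\<close> by (intro set_plus_subset[OF submod_subspace[OF U]]) auto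
  qed
  moreover have "u \<in> (\<lambda>g. g * u) ` G + L"
    using set_plus_intro[OF imageI[OF G_one, of "\<lambda>g. g * u"] submod_zero[OF L]] by simp
  ultimately show ?thesis using \<open>u \<notin> L\<close> by blast
qed

lemma exists_factor_in_gpart:
  assumes L: "submod L" and n: "n \<in> cfs smult G" and x: "x \<in> gpart G L n" "x \<notin> L"
    and fd: "fin_dim_mod ((\<lambda>g. g * x) ` G + L) L"
  obtains U where "factor_of_type n L U" "U \<subseteq> (\<lambda>g. g * x) ` G + L"
proof -
  let ?Nx = "(\<lambda>g. g * x) ` G + L"
  have Nx: "submod ?Nx" using submod_set_plus[OF submod_image_mult_right[OF submod_G] L] .
  have "L \<subseteq> ?Nx" by (rule set_zero_plus2) (use G_zero in force)
  moreover have "x \<in> ?Nx" using set_plus_intro[OF imageI[OF G_one, of "\<lambda>g. g * x"] submod_zero[OF L]] by simp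
  ultimately obtain U where LU: "simple_subquot L U" and "U \<subseteq> ?Nx"
    using obtain_simple_subquot[OF L Nx _ _ fd] x(2) by blast
  have U: "submod U" and "L \<subseteq> U" using LU unfolding simple_subquot_def by auto
  have n_max: "maximal_ideal G n" using cfs_maximal_ideal[OF n] .
  have P: "annihilator L U \<in> cfs smult G"
    using annihilator_in_cfs[OF LU fin_dim_mod_subset[OF submod_subspace[OF U] fd \<open>L \<subseteq> U\<close> \<open>U \<subseteq> ?Nx\<close>]] .
  obtain j where j: "\<forall>g\<in>ipow n j. g * x \<in> L" using x(1) unfolding gpart_def by blast
  have "ipow n j \<subseteq> annihilator L U"
  proof
    fix g assume g: "g \<in> ipow n j"
    have N: "ideal (ipow n j)" using ideal_ipow[OF maximal_ideal_ideal[OF n_max]] .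
    have "g * u \<in> L" if "u \<in> U" for u
    proof -
      obtain c l where cl: "u = c + l" "c \<in> (\<lambda>g. g * x) ` G" "l \<in> L"
        using \<open>u \<in> U\<close> \<open>U \<subseteq> ?Nx\<close> by (blast elim: set_plus_elim)
      then obtain h where "h \<in> G" "c = h * x" by blast
      then have "(g * h) * x \<in> L" using j ideal_mult_right[OF N _ g] by blast
      moreover have "g * l \<in> L" using submod_mult[OF L _ cl(3)] g ideal_subset[OF N] by blast
      ultimately show ?thesis using cl \<open>c = h * x\<close> submod_add[OF L] by (simp add: distrib_left mult.assoc)
    qed
    then show "g \<in> annihilator L U" using g ideal_subset[OF N] unfolding annihilator_def by blast
  qed
  moreover have "maximal_ideal G (annihilator L U)" using cfs_maximal_ideal[OF P] .
  ultimately have "annihilator L U = n" using maximal_ideal_eq_if_ipow_subset[OF n_max] by blast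
  moreover have "\<forall>g\<in>annihilator L U. \<forall>u\<in>U. g * u \<in> L" unfolding annihilator_def by blast
  ultimately have "factor_of_type n L U" using LU unfolding factor_of_type_def by simp
  from that[OF this \<open>U \<subseteq> ?Nx\<close>] show ?thesis .
qed

lemma simple_subquot_filtration_step:
  assumes LU: "simple_subquot L U" and A: "\<And>t. t \<le> k \<Longrightarrow> submod (A t) \<and> L \<subseteq> A t"
    and "U \<subseteq> A 0" "\<not> U \<subseteq> A k"
  obtains t where "t < k" "U \<subseteq> A t" "U \<inter> A (Suc t) = L"
proof -
  have "\<exists>t<k. (\<forall>i\<le>t. \<not> \<not> U \<subseteq> A i) \<and> \<not> U \<subseteq> A (Suc t)"
    by (rule ex_least_nat_less) (use assms(3,4) in auto)
  then obtain t where t: "t < k" "U \<subseteq> A t" "\<not> U \<subseteq> A (Suc t)" by auto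
  have U: "submod U" and "L \<subseteq> U" using LU unfolding simple_subquot_def by auto
  have "submod (A (Suc t))" "L \<subseteq> A (Suc t)" using A[of "Suc t"] t(1) by auto
  then have "U \<inter> A (Suc t) = L \<or> U \<inter> A (Suc t) = U"
    using simple_subquotD[OF LU submod_Int[OF U]] \<open>L \<subseteq> U\<close> by blast
  then show ?thesis using that t by blast
qed

lemma is_factor_if_factor_of_type:
  assumes "factor_of_type n X Y" "M0 \<subseteq> X" "Y \<subseteq> M"
  shows "is_factor G n M M0"
proof -
  have "submod X" "submod Y" "X \<subseteq> Y" "X \<noteq> Y" "\<forall>W. submod W \<and> X \<subseteq> W \<and> W \<subseteq> Y \<longrightarrow> W = X \<or> W = Y"
    "\<forall>g\<in>n. \<forall>y\<in>Y. g * y \<in> X"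
    using assms(1) unfolding factor_of_type_def simple_subquot_def by simp_all
  then show ?thesis unfolding is_factor_def using assms(2,3)
    by (intro exI[of _ Y] exI[of _ X] conjI) assumption+
qed

lemma sum_mem_set_sum: "(\<And>i. i < r \<Longrightarrow> f i \<in> M i) \<Longrightarrow> (\<Sum>i<(r::nat). f i) \<in> (\<Sum>i<r. M i)"
  by (induction r) auto

lemma image_mult_right_subset_sum:
  assumes "0 \<in> B"
  shows "(\<lambda>g. g * (\<Sum>i<(r::nat). a i * \<mu> i)) ` G \<subseteq> (\<Sum>i<r. (\<lambda>z. z * \<mu> i) ` dbl G (a i) G + B)"
proof
  fix v assume "v \<in> (\<lambda>g. g * (\<Sum>i<r. a i * \<mu> i)) ` G"
  then obtain g where g: "g \<in> G" "v = g * (\<Sum>i<r. a i * \<mu> i)" by blast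
  have "(g * a i) * \<mu> i + 0 \<in> (\<lambda>z. z * \<mu> i) ` dbl G (a i) G + B" for i
    using mem_dbl[OF g(1) G_one, of "a i"] assms by (intro set_plus_intro imageI) auto
  then have "(\<Sum>i<r. (g * a i) * \<mu> i) \<in> (\<Sum>i<r. (\<lambda>z. z * \<mu> i) ` dbl G (a i) G + B)"
    by (intro sum_mem_set_sum) simp
  then show "v \<in> (\<Sum>i<r. (\<lambda>z. z * \<mu> i) ` dbl G (a i) G + B)"
    using g(2) by (simp add: sum_distrib_left mult.assoc)
qed

lemma dbl_mult_mem_Aideal:
  assumes "z \<in> dbl G a m" "\<mu> \<in> ipow m t"
  shows "z * \<mu> \<in> Aideal G m (Suc t)"
proof (rule setmul_apply[OF submod_zero[OF submod_Aideal] submod_add[OF submod_Aideal]])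
  show "z \<in> setmul (setmul G {a}) m" using assms(1) unfolding dbl_def .
  fix c e assume "e \<in> m"
  then have "e * \<mu> \<in> ipow m (Suc t)" using setmul_mult assms(2) by simp
  then show "c * (e * \<mu>) \<in> Aideal G m (Suc t)" unfolding Aideal_def by (auto intro: setmul_mult)
qed

lemma factor_in_double_coset:
  assumes n: "n \<subseteq> G" and m: "ideal m" and W: "factor_of_type n (Aideal G m (Suc t)) W"
    "W \<subseteq> (\<lambda>g. g * u) ` G + Aideal G m (Suc t)" and u: "u \<in> Aideal G m t"
  obtains a where "is_factor G n (dbl G a G) (dbl G a m)"
proof -
  let ?B = "Aideal G m (Suc t)"
  obtain r :: nat and a \<mu> where u_eq: "u = (\<Sum>i<r. a i * \<mu> i)" and \<mu>: "\<forall>i<r. \<mu> i \<in> ipow m t"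
    using u unfolding Aideal_def by (auto elim: setmul_memE)
  define M where "M i = (\<lambda>z. z * \<mu> i) ` dbl G (a i) G + ?B" for i
  have M: "submod (M i)" "?B \<subseteq> M i" for i
  proof -
    show "submod (M i)" unfolding M_def by (rule submod_set_plus[OF submod_image_mult_right[OF submod_dbl] submod_Aideal])
    have "0 \<in> (\<lambda>z. z * \<mu> i) ` dbl G (a i) G"
      using submod_zero[OF submod_dbl] by (metis image_eqI mult_zero_left)
    then show "?B \<subseteq> M i" unfolding M_def by (rule set_zero_plus2)
  qed
  have "(\<lambda>g. g * u) ` G \<subseteq> (\<Sum>i<r. M i)"
    unfolding u_eq M_def by (rule image_mult_right_subset_sum[OF submod_zero[OF submod_Aideal]])
  then have "W \<subseteq> ?B + (\<Sum>i<r. M i)"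
    using W(2) set_plus_mono2[OF _ subset_refl, of "(\<lambda>g. g * u) ` G" "\<Sum>i<r. M i" ?B] by (simp add: add.commute)
  then obtain i X' Y' where "i < r" "factor_of_type n X' Y'" "?B \<subseteq> X'" "Y' \<subseteq> M i"
    using factor_of_type_in_sum[OF W(1) n submod_Aideal subset_refl, of r M] M by blast
  let ?D = "dbl G (a i) G"
  have factor: "factor_of_type n {z \<in> ?D. z * \<mu> i \<in> X'} {z \<in> ?D. z * \<mu> i \<in> Y'}"
    using factor_of_type_pullback[OF \<open>factor_of_type n X' Y'\<close> n submod_Aideal \<open>?B \<subseteq> X'\<close> submod_dbl]
      \<open>Y' \<subseteq> M i\<close> unfolding M_def by blast
  have "dbl G (a i) m \<subseteq> ?D" using setmul_mono[OF subset_refl ideal_subset[OF m]] unfolding dbl_def by blast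
  then have "dbl G (a i) m \<subseteq> {z \<in> ?D. z * \<mu> i \<in> X'}"
    using dbl_mult_mem_Aideal \<mu> \<open>i < r\<close> \<open>?B \<subseteq> X'\<close> by blast
  then show ?thesis using is_factor_if_factor_of_type[OF factor] that by blast
qed

lemma factor_over_Aideal:
  assumes n: "n \<subseteq> G" and m: "ideal m" and LU: "factor_of_type n (Aideal G m k) U"
  obtains a where "is_factor G n (dbl G a G) (dbl G a m)"
proof -
  let ?A = "Aideal G m" and ?L = "Aideal G m k"
  have simple: "simple_subquot ?L U" using LU unfolding factor_of_type_def by blast
  have antimono: "?A j \<subseteq> ?A i" if "i \<le> j" for i j
    unfolding Aideal_def by (rule setmul_mono[OF subset_refl ipow_antimono[OF m that]])
  have "?A 0 = UNIV" unfolding Aideal_def using setmul_mult[OF UNIV_I G_one] by auto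
  moreover have "\<not> U \<subseteq> ?L" using simple unfolding simple_subquot_def by blast
  ultimately obtain t where t: "t < k" "U \<subseteq> ?A t" "U \<inter> ?A (Suc t) = ?L"
    using simple_subquot_filtration_step[OF simple, of k ?A] submod_Aideal antimono by blast
  let ?B = "?A (Suc t)"
  have "?L \<subseteq> ?B" using antimono t(1) by simp
  then have "?L + ?B \<subseteq> ?B" by (rule set_plus_subset[OF submod_subspace[OF submod_Aideal] _ subset_refl])
  moreover have "?B \<subseteq> ?L + ?B" by (rule set_zero_plus2[OF submod_zero[OF submod_Aideal]])
  ultimately have LB: "?L + ?B = ?B" by blast
  have "factor_of_type n (?L + ?B) (U + ?B)"
    by (rule factor_of_type_plus[OF LU n submod_Aideal]) (use t(3) in blast)
  then have factor: "factor_of_type n ?B (U + ?B)" unfolding LB .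
  obtain u where "u \<in> U" "u \<notin> ?L" using simple unfolding simple_subquot_def by blast
  then have "U = (\<lambda>g. g * u) ` G + ?L" by (rule simple_subquot_generated[OF simple])
  then have "U + ?B = (\<lambda>g. g * u) ` G + ?B" by (metis LB add.assoc)
  then have W: "U + ?B \<subseteq> (\<lambda>g. g * u) ` G + ?B" by simp
  have "u \<in> ?A t" using t(2) \<open>u \<in> U\<close> by blast
  from factor_in_double_coset[OF n m factor W this] show ?thesis using that by blast
qed

lemma supp_quot_Aideal_subset_Xset:
  assumes noeth: "noetherian G" and qcen: "quasicentral G" and m: "m \<in> cfs smult G"
  shows "supp_quot smult G (Aideal G m k) \<subseteq> Xset smult G m"
proof
  fix n assume "n \<in> supp_quot smult G (Aideal G m k)"
  let ?L = "Aideal G m k"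
  obtain x where n: "n \<in> cfs smult G" and x: "x \<in> gpart G ?L n" "x \<notin> ?L"
    using \<open>n \<in> supp_quot smult G ?L\<close> unfolding supp_quot_def by blast
  have n_G: "n \<subseteq> G" using ideal_subset[OF cfs_ideal[OF n]] .
  have Gx: "submod ((\<lambda>g. g * x) ` G + ?L)"
    by (rule submod_set_plus[OF submod_image_mult_right[OF submod_G] submod_Aideal])
  have "(\<lambda>g. g * x) ` G \<subseteq> dbl G x G" using mem_dbl[OF _ G_one, of _ x] by auto
  then have "(\<lambda>g. g * x) ` G + ?L \<subseteq> dbl G x G + ?L" by (rule set_plus_mono2) simp
  moreover have "?L \<subseteq> (\<lambda>g. g * x) ` G + ?L" by (rule set_zero_plus2) (use G_zero in force)
  ultimately have "fin_dim_mod ((\<lambda>g. g * x) ` G + ?L) ?L"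
    using fin_dim_mod_subset[OF submod_subspace[OF Gx] fin_dim_mod_double_coset[OF noeth qcen cfs_ideal[OF m] cfs_fin_dim_mod[OF m]]]
    by blast
  then obtain U where "factor_of_type n ?L U"
    using exists_factor_in_gpart[OF submod_Aideal n x] by blast
  then obtain a where "is_factor G n (dbl G a G) (dbl G a m)" by (rule factor_over_Aideal[OF n_G cfs_ideal[OF m]])
  then show "n \<in> Xset smult G m" using n unfolding Xset_def by blast
qed

end

theorem mainTheorem11:
  fixes smult :: "'k::field \<Rightarrow> 'a::ring_1 \<Rightarrow> 'a" and G :: "'a set"
  assumes "is_algebra smult"
    and "subalgebra smult G"
    and "noetherian G"
    and "quasicommutative smult G"
    and "quasicentral G"
  shows "HC_block_subalgebra smult G \<and>
    (\<forall>m\<in>cfs smult G. \<forall>k\<ge>1. supp_quot smult G (Aideal G m k) \<subseteq> Xset smult G m)"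
proof -
  interpret k_subalgebra smult G using assms(1,2) by unfold_locales
  show ?thesis
    unfolding HC_block_subalgebra_def
    using block_quot_Aideal[OF assms(3-5)] supp_quot_Aideal_subset_Xset[OF assms(3,5)] by blast
qed

end
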